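(* In the entry–exit model described in the context (under all its standing assumptions (A1)–(A8)), the Bellman operator $T$ defined for $v \in \mathscr C$ by $$(Tv)(\phi,p) = \pi(\phi,p) + \beta \max\left\{0, \int v(\phi',p)\,\Gamma(\phi,\mathrm d\phi')\right\}$$ maps $\mathscr C$ into $\mathscr C$ and is a contraction on the metric space $(\mathscr C, d)$. Its unique fixed point $v^*$ is strictly increasing, and $v^*(\phi,p) < 0$ whenever $\phi = 0$ or $p = 0$.
   Context: Let $\mathbb R_+=[0,\infty)$ and let $\mathscr B$ denote its Borel sets; integrals are over $\mathbb R_+$. "Increasing" for functions on $\mathbb R_+^2$ refers to the componentwise order. Standing assumptions: (A1) A demand function $D$ on $\mathbb R_+$ is continuous and strictly decreasing with $D(0)=\infty$ and $\lim_{p\to\infty}D(p)=0$. (A2) Profit $\pi(\phi,p)$ and output $q(\phi,p)$ are functions of productivity $\phi\ge 0$ and price $p\ge0$; both are continuous and strictly increasing on $\mathbb R_+^2$; $q\ge 0$; and $\pi(\phi,p)<0$ if $\phi=0$ or $p=0$. (A3) $\Gamma$ is a Markov transition kernel on $\mathbb R_+$ which is monotone increasing (i.e. $\phi\mapsto\Gamma(\phi,[0,a])$ is decreasing for every $a\ge0$); $\Gamma^n$ denotes its $n$-step kernel. Moreover (a) for each $a>0$ and $\phi\ge0$ there is $n\in\mathbb N$ with $\Gamma^n(\phi,[0,a))>0$; (b) for each $p>0$ there exists $\phi\ge0$ with $\int \pi(\phi',p)\Gamma(\phi,\mathrm d\phi')\ge 0$. $\beta=1/(1+r)$ for a fixed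 $r>0$. (A4) $\gamma$ is a Borel probability measure on $\mathbb R_+$ with $\int q(\phi,p)\gamma(\mathrm d\phi)<\infty$ for all $p$ and $\gamma([0,a])>0$ for all $a>0$; $c_e>0$ is a fixed entry cost. (A5) There exists $p>0$ with $\int \pi(\phi,p)\gamma(\mathrm d\phi)\ge c_e$. (A6) For every $p$, $\sum_{t\ge0}\beta^t\int \pi(\phi',p)\Gamma^t(0,\mathrm d\phi')\le 0$. (A7) Let $\{\phi_t\}$ be the process with $\phi_0\sim\gamma$ and $\phi_{t+1}\sim\Gamma(\phi_t,\cdot)$. There is $\delta\in(\beta,1)$ with $\sum_{t\ge0}\delta^t\,\mathbb E\,\pi(\phi_t,p)<\infty$ for all $p\ge0$. Fix a constant $b$ with $\pi+b\ge1$ and set $\kappa(\phi,p):=\sum_{t\ge0}\delta^t\mathbb E_\phi[\pi(\phi_t,p)+b]$, where under $\mathbb E_\phi$ the process starts at $\phi_0=\phi$ and evolves via $\Gamma$; $\kappa$ is assumed finite everywhere (so $1\le\kappa<\infty$). For $f$ on $\mathbb R_+^2$ let $\|f\|_\kappa:=\sup|f/\kappa|$. Let $\mathscr C$ be the set of continuous, increasing functions $f$ on $\mathbb R_+^2$ with $\|f\|_\kappa<\infty$, with metric $d(v,w):=\|w-v\|_\kappa$. (A8) For every $u\in\mathscr C$, the map $(\phi,p)\mapsto\int u(\phi',p)\Gamma(\phi,\mathrm d\phi')$ is continuous. *)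

theory Defs
  imports "HOL-Probability.Probability"
begin

definition Rp :: "real measure" where
  "Rp = restrict_space borel {0..}"

definition Q :: "(real \<times> real) set" where
  "Q = {0..} \<times> {0..}"

primrec kpow :: "(real \<Rightarrow> real measure) \<Rightarrow> nat \<Rightarrow> real \<Rightarrow> real measure" where
  "kpow G 0 x = return Rp x"
| "kpow G (Suc n) x = bind (kpow G n x) G"

definition incr2 :: "(real \<Rightarrow> real \<Rightarrow> real) \<Rightarrow> bool" where
  "incr2 f \<longleftrightarrow> (\<forall>x y x' y'. 0 \<le> x \<and> 0 \<le> y \<and> x \<le> x' \<and> y \<le> y' \<longrightarrow> f x y \<le> f x' y')"

definition strict_incr2 :: "(real \<Rightarrow> real \<Rightarrow> real) \<Rightarrow> bool" where
  "strict_incr2 f \<longleftrightarrow> (\<forall>x y x' y'. 0 \<le> x \<and> 0 \<le> y \<and> x \<le> x' \<and> y \<le> y' \<and> (x, y) \<noteq> (x', y')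
      \<longrightarrow> f x y < f x' y')"

definition cont2 :: "(real \<Rightarrow> real \<Rightarrow> real) \<Rightarrow> bool" where
  "cont2 f \<longleftrightarrow> continuous_on Q (\<lambda>(x, y). f x y)"

definition kappa :: "(real \<Rightarrow> real measure) \<Rightarrow> (real \<Rightarrow> real \<Rightarrow> real) \<Rightarrow> real \<Rightarrow> real
    \<Rightarrow> real \<Rightarrow> real \<Rightarrow> real" where
  "kappa G prof b \<delta> x p = (\<Sum>t. \<delta> ^ t * (\<integral>y. prof y p + b \<partial>kpow G t x))"

definition knorm :: "(real \<Rightarrow> real \<Rightarrow> real) \<Rightarrow> (real \<Rightarrow> real \<Rightarrow> real) \<Rightarrow> real" where
  "knorm k f = (SUP z\<in>Q. \<bar>f (fst z) (snd z) / k (fst z) (snd z)\<bar>)"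

text \<open>The space C. Functions are represented on all of R x R but are required to vanish
  outside R_+^2 (extensional representation of functions on R_+^2).\<close>
definition CC :: "(real \<Rightarrow> real \<Rightarrow> real) \<Rightarrow> (real \<Rightarrow> real \<Rightarrow> real) set" where
  "CC k = {f. cont2 f \<and> incr2 f \<and> bdd_above ((\<lambda>z. \<bar>f (fst z) (snd z) / k (fst z) (snd z)\<bar>) ` Q)
            \<and> (\<forall>x y. (x, y) \<notin> Q \<longrightarrow> f x y = 0)}"

definition dk :: "(real \<Rightarrow> real \<Rightarrow> real) \<Rightarrow> (real \<Rightarrow> real \<Rightarrow> real) \<Rightarrow> (real \<Rightarrow> real \<Rightarrow> real) \<Rightarrow> real" where
  "dk k v w = knorm k (\<lambda>x y. w x y - v x y)"

definition bellman :: "(real \<Rightarrow> real measure) \<Rightarrow> (real \<Rightarrow> real \<Rightarrow> real) \<Rightarrow> real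
    \<Rightarrow> (real \<Rightarrow> real \<Rightarrow> real) \<Rightarrow> (real \<Rightarrow> real \<Rightarrow> real)" where
  "bellman G prof \<beta> v x p =
     (if 0 \<le> x \<and> 0 \<le> p then prof x p + \<beta> * max 0 (\<integral>y. v y p \<partial>G x) else 0)"

end

(* The weight kappa = sum_t delta^t E[pi + b] obeys the drift inequality
   int kappa(phi', p) Gamma(phi, dphi') <= kappa(phi, p) / delta, so the continuation term
   beta int v dGamma moves the kappa-norm by at most beta / delta < 1: T is a contraction, and the
   space C is complete because kappa is increasing, which makes convergence in the kappa-norm
   locally uniform.  That T v is again increasing is first-order stochastic dominance for the
   monotone kernel Gamma.

   At the fixed point v, strict monotonicity is inherited from pi.  At price 0 the excess
   d = v - pi is a nonnegative kappa-bounded subsolution d <= beta int d dGamma, hence zero, so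
   v = pi < 0.  At productivity 0 either continuation is worthless and v = pi < 0, or it is
   valuable at every state, and then v(0, p) is the discounted profit of never exiting, which
   (A6) makes nonpositive; comparing with the price p + 1 gives strictness. *)

theory Submission
  imports Defs
begin

lemma space_Rp [simp]: "space Rp = {0..}"
  by (simp add: Rp_def space_restrict_space)

lemma mem_Q_iff [simp]: "(x, p) \<in> Q \<longleftrightarrow> 0 \<le> x \<and> 0 \<le> p"
  by (simp add: Q_def)

lemma incr2D: "incr2 f \<Longrightarrow> 0 \<le> x \<Longrightarrow> 0 \<le> y \<Longrightarrow> x \<le> x' \<Longrightarrow> y \<le> y' \<Longrightarrow> f x y \<le> f x' y'"
  by (simp add: incr2_def)

lemma strict_incr2_imp_incr2:
  assumes "strict_incr2 f"
  shows "incr2 f"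
  unfolding incr2_def
proof (intro allI impI)
  fix x y x' y' :: real
  assume "0 \<le> x \<and> 0 \<le> y \<and> x \<le> x' \<and> y \<le> y'"
  with assms show "f x y \<le> f x' y'"
    unfolding strict_incr2_def by (cases "(x, y) = (x', y')") (auto intro: less_imp_le)
qed

lemma continuous_on_cont2_slice: "cont2 f \<Longrightarrow> 0 \<le> p \<Longrightarrow> continuous_on {0..} (\<lambda>x. f x p)"
  unfolding cont2_def Q_def
  by (rule continuous_on_compose2[where f="\<lambda>x. (x, p)" and g="\<lambda>(x, y). f x y", simplified])
     (auto intro!: continuous_intros)

lemma borel_measurable_cont2_slice: "cont2 f \<Longrightarrow> 0 \<le> p \<Longrightarrow> (\<lambda>x. f x p) \<in> borel_measurable Rp"
  unfolding Rp_def by (rule borel_measurable_continuous_on_restrict[OF continuous_on_cont2_slice])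

lemma down_closed_nonneg_cases:
  fixes D :: "real set"
  assumes D: "D \<subseteq> {0..}" and down: "\<And>y z. y \<in> D \<Longrightarrow> 0 \<le> z \<Longrightarrow> z \<le> y \<Longrightarrow> z \<in> D"
  obtains "D = {}" | "D = {0..}" | a where "D = {0..a}" | a where "D = {0..<a}"
proof (cases "D = {} \<or> \<not> bdd_above D")
  case True
  show thesis
  proof (cases "D = {}")
    case False
    with True have unbounded: "\<not> bdd_above D" by blast
    have "D = {0..}"
    proof (intro equalityI subsetI)
      fix z :: real assume "z \<in> {0..}"
      obtain y where "y \<in> D" "z < y" using unbounded by (auto simp: bdd_above_def not_le)
      then show "z \<in> D" using down \<open>z \<in> {0..}\<close> by auto
    qed (use D in auto)
    then show thesis by (rule that(2))
  qed (rule that(1))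
next
  case False
  then have ne: "D \<noteq> {}" and bdd: "bdd_above D" by auto
  define a where "a = Sup D"
  have le: "y \<le> a" if "y \<in> D" for y using cSup_upper[OF that bdd] by (simp add: a_def)
  show thesis
  proof (cases "a \<in> D")
    case True
    then have "D = {0..a}" using le down D by auto
    then show thesis using that by blast
  next
    case False
    have "D = {0..<a}"
    proof (intro equalityI subsetI)
      fix z assume "z \<in> D" then show "z \<in> {0..<a}"
        using le[of z] False D by (cases "z = a") auto
    next
      fix z assume z: "z \<in> {0..<a}"
      then obtain y where "y \<in> D" "z < y" using less_cSup_iff[OF ne bdd] by (auto simp: a_def)
      then show "z \<in> D" using down z by auto
    qed
    then show thesis using that by blast
  qed
qed

lemma nn_integral_layer_cake:
  fixes h :: "'a \<Rightarrow> real"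
  assumes M: "sigma_finite_measure M" and h[measurable]: "h \<in> borel_measurable M"
    and nn: "\<And>y. y \<in> space M \<Longrightarrow> 0 \<le> h y"
  shows "(\<integral>\<^sup>+ y. ennreal (h y) \<partial>M)
       = (\<integral>\<^sup>+ s. (\<integral>\<^sup>+ y. indicator {0..<h y} s \<partial>M) \<partial>lborel)"
proof -
  interpret pair_sigma_finite M lborel
    using M by (simp add: pair_sigma_finite_def lborel.sigma_finite_measure_axioms)
  have "(\<integral>\<^sup>+ s. (\<integral>\<^sup>+ y. indicator {0..<h y} s \<partial>M) \<partial>lborel)
      = (\<integral>\<^sup>+ y. (\<integral>\<^sup>+ s. indicator {0..<h y} s \<partial>lborel) \<partial>M)"
    by (rule Fubini') (unfold indicator_def atLeastLessThan_iff, measurable)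
  also have "\<dots> = (\<integral>\<^sup>+ y. ennreal (h y) \<partial>M)"
    using nn by (intro nn_integral_cong) simp
  finally show ?thesis by simp
qed

section \<open>Weighted spaces of increasing continuous functions\<close>

locale weight =
  fixes k :: "real \<Rightarrow> real \<Rightarrow> real"
  assumes weight_pos: "\<And>x p. 0 \<le> x \<Longrightarrow> 0 \<le> p \<Longrightarrow> 0 < k x p"
    and weight_incr: "incr2 k"
begin

lemma weighted_bdd_aboveI:
  assumes "\<And>x p. 0 \<le> x \<Longrightarrow> 0 \<le> p \<Longrightarrow> \<bar>f x p\<bar> \<le> C * k x p"
  shows "bdd_above ((\<lambda>z. \<bar>f (fst z) (snd z) / k (fst z) (snd z)\<bar>) ` Q)"
proof (rule bdd_aboveI2)
  fix z :: "real \<times> real" assume "z \<in> Q"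
  then show "\<bar>f (fst z) (snd z) / k (fst z) (snd z)\<bar> \<le> C"
    using assms[of "fst z" "snd z"] weight_pos[of "fst z" "snd z"]
    by (cases z) (simp add: abs_divide pos_divide_le_eq)
qed

lemma knorm_bound:
  assumes "bdd_above ((\<lambda>z. \<bar>f (fst z) (snd z) / k (fst z) (snd z)\<bar>) ` Q)" "0 \<le> x" "0 \<le> p"
  shows "\<bar>f x p\<bar> \<le> knorm k f * k x p"
proof -
  have "\<bar>f x p / k x p\<bar> \<le> knorm k f"
    unfolding knorm_def using cSUP_upper[OF _ assms(1), of "(x, p)"] assms(2,3) by simp
  then show ?thesis using weight_pos[OF assms(2,3)] by (simp add: abs_divide pos_divide_le_eq)
qed

lemma knorm_least:
  assumes "\<And>x p. 0 \<le> x \<Longrightarrow> 0 \<le> p \<Longrightarrow> \<bar>f x p\<bar> \<le> c * k x p"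
  shows "knorm k f \<le> c"
  unfolding knorm_def
proof (rule cSUP_least)
  show "Q \<noteq> {}" using mem_Q_iff[of 0 0] by blast
  fix z :: "real \<times> real" assume "z \<in> Q"
  then show "\<bar>f (fst z) (snd z) / k (fst z) (snd z)\<bar> \<le> c"
    using assms[of "fst z" "snd z"] weight_pos[of "fst z" "snd z"]
    by (cases z) (simp add: abs_divide pos_divide_le_eq)
qed

lemma CC_boundE:
  assumes "v \<in> CC k"
  obtains C where "\<And>x p. 0 \<le> x \<Longrightarrow> 0 \<le> p \<Longrightarrow> \<bar>v x p\<bar> \<le> C * k x p"
proof -
  have "bdd_above ((\<lambda>z. \<bar>v (fst z) (snd z) / k (fst z) (snd z)\<bar>) ` Q)"
    using assms by (simp add: CC_def)
  from knorm_bound[OF this] show thesis by (rule that)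
qed

lemma CC_incr: "v \<in> CC k \<Longrightarrow> 0 \<le> x \<Longrightarrow> 0 \<le> p \<Longrightarrow> x \<le> x' \<Longrightarrow> p \<le> p' \<Longrightarrow> v x p \<le> v x' p'"
  by (simp add: CC_def incr2_def)

lemma CC_outside: "v \<in> CC k \<Longrightarrow> \<not> (0 \<le> x \<and> 0 \<le> p) \<Longrightarrow> v x p = 0"
  by (simp add: CC_def)

lemma borel_measurable_CC: "v \<in> CC k \<Longrightarrow> 0 \<le> p \<Longrightarrow> (\<lambda>y. v y p) \<in> borel_measurable Rp"
  by (rule borel_measurable_cont2_slice) (simp_all add: CC_def)

lemma dk_bound:
  assumes v: "v \<in> CC k" and w: "w \<in> CC k" and "0 \<le> x" "0 \<le> p"
  shows "\<bar>w x p - v x p\<bar> \<le> dk k v w * k x p"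
proof -
  obtain C1 where "\<And>x p. 0 \<le> x \<Longrightarrow> 0 \<le> p \<Longrightarrow> \<bar>v x p\<bar> \<le> C1 * k x p"
    using CC_boundE[OF v] by blast
  moreover obtain C2 where "\<And>x p. 0 \<le> x \<Longrightarrow> 0 \<le> p \<Longrightarrow> \<bar>w x p\<bar> \<le> C2 * k x p"
    using CC_boundE[OF w] by blast
  ultimately have "\<bar>w x p - v x p\<bar> \<le> (C2 + C1) * k x p" if "0 \<le> x" "0 \<le> p" for x p
    using that abs_triangle_ineq4[of "w x p" "v x p"] by (fastforce simp: distrib_right)
  then show ?thesis
    unfolding dk_def by (rule knorm_bound[OF weighted_bdd_aboveI]) (use assms in auto)
qed

lemma dk_least:
  "(\<And>x p. 0 \<le> x \<Longrightarrow> 0 \<le> p \<Longrightarrow> \<bar>w x p - v x p\<bar> \<le> c * k x p) \<Longrightarrow> dk k v w \<le> c"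
  unfolding dk_def by (rule knorm_least)

lemma dk_nonneg:
  assumes "v \<in> CC k" "w \<in> CC k"
  shows "0 \<le> dk k v w"
proof -
  have "0 \<le> dk k v w * k 0 0"
    using dk_bound[OF assms, of 0 0] abs_ge_zero[of "w 0 0 - v 0 0"] by linarith
  then show ?thesis using weight_pos[of 0 0] by (simp add: zero_le_mult_iff)
qed

lemma dk_commute: "dk k v w = dk k w v"
  unfolding dk_def knorm_def by (simp add: abs_minus_commute)

lemma dk_eq_0_iff:
  assumes v: "v \<in> CC k" and w: "w \<in> CC k"
  shows "dk k v w = 0 \<longleftrightarrow> v = w"
proof
  assume "dk k v w = 0"
  then have "w x p = v x p" if "0 \<le> x" "0 \<le> p" for x p
    using dk_bound[OF v w that] by simp
  then show "v = w"
    using CC_outside[OF v] CC_outside[OF w] by (metis ext)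
next
  assume "v = w"
  then show "dk k v w = 0"
    using dk_least[of w w 0] dk_nonneg[OF w w] by simp
qed

lemma dk_triangle:
  assumes u: "u \<in> CC k" and v: "v \<in> CC k" and w: "w \<in> CC k"
  shows "dk k u w \<le> dk k u v + dk k v w"
proof (rule dk_least)
  fix x p :: real assume "0 \<le> x" "0 \<le> p"
  then have "\<bar>v x p - u x p\<bar> \<le> dk k u v * k x p" "\<bar>w x p - v x p\<bar> \<le> dk k v w * k x p"
    using dk_bound u v w by blast+
  then show "\<bar>w x p - u x p\<bar> \<le> (dk k u v + dk k v w) * k x p"
    by (simp add: distrib_right)
qed

lemma zero_in_CC: "(\<lambda>x p. 0) \<in> CC k"
  unfolding CC_def cont2_def incr2_def
  by (auto intro: weighted_bdd_aboveI[where C=0])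

text \<open>\<^const>\<open>dk\<close> is only meaningful on \<^term>\<open>CC k\<close>; the absolute value makes it
  nonnegative everywhere, as \<^locale>\<open>Metric_space\<close> requires.\<close>
sublocale CC_metric: Metric_space "CC k" "\<lambda>v w. \<bar>dk k v w\<bar>"
proof unfold_locales
  show "\<bar>dk k v w\<bar> = \<bar>dk k w v\<bar>" for v w
    by (simp only: dk_commute)
  show "\<bar>dk k v w\<bar> = 0 \<longleftrightarrow> v = w" if "v \<in> CC k" "w \<in> CC k" for v w
    using dk_eq_0_iff[OF that] by simp
  show "\<bar>dk k u w\<bar> \<le> \<bar>dk k u v\<bar> + \<bar>dk k v w\<bar>" if "u \<in> CC k" "v \<in> CC k" "w \<in> CC k" for u v w
    using dk_triangle[OF that] dk_nonneg that by simp
qed simp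

definition weighted_tendsto :: "(nat \<Rightarrow> real \<Rightarrow> real \<Rightarrow> real) \<Rightarrow> (real \<Rightarrow> real \<Rightarrow> real) \<Rightarrow> bool" where
  "weighted_tendsto u f \<longleftrightarrow> (\<forall>\<epsilon>>0. \<exists>N. \<forall>n\<ge>N. \<forall>x p. 0 \<le> x \<longrightarrow> 0 \<le> p \<longrightarrow>
     \<bar>f x p - u n x p\<bar> \<le> \<epsilon> * k x p)"

definition weighted_Cauchy :: "(nat \<Rightarrow> real \<Rightarrow> real \<Rightarrow> real) \<Rightarrow> bool" where
  "weighted_Cauchy u \<longleftrightarrow> (\<forall>\<epsilon>>0. \<exists>N. \<forall>n\<ge>N. \<forall>n'\<ge>N. \<forall>x p. 0 \<le> x \<longrightarrow> 0 \<le> p \<longrightarrow>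
     \<bar>u n' x p - u n x p\<bar> \<le> \<epsilon> * k x p)"

lemma weighted_tendstoE:
  assumes "weighted_tendsto u f" "0 < \<epsilon>"
  obtains N where "\<And>n x p. N \<le> n \<Longrightarrow> 0 \<le> x \<Longrightarrow> 0 \<le> p \<Longrightarrow> \<bar>f x p - u n x p\<bar> \<le> \<epsilon> * k x p"
  using assms unfolding weighted_tendsto_def by blast

lemma weighted_CauchyE:
  assumes "weighted_Cauchy u" "0 < \<epsilon>"
  obtains N where
    "\<And>n n' x p. N \<le> n \<Longrightarrow> N \<le> n' \<Longrightarrow> 0 \<le> x \<Longrightarrow> 0 \<le> p \<Longrightarrow> \<bar>u n' x p - u n x p\<bar> \<le> \<epsilon> * k x p"
  using assms unfolding weighted_Cauchy_def by blast

text \<open>The weight is increasing, hence bounded on bounded parts of the quadrant, so convergence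
  in the weighted norm is locally uniform.\<close>
lemma weighted_tendsto_uniform_limit:
  assumes lim: "weighted_tendsto u f" and N: "0 \<le> N"
  shows "uniform_limit (Q \<inter> {w. fst w < N \<and> snd w < N})
           (\<lambda>n w. u n (fst w) (snd w)) (\<lambda>w. f (fst w) (snd w)) sequentially"
  unfolding uniform_limit_sequentially_iff
proof (intro allI impI)
  fix \<epsilon> :: real assume "0 < \<epsilon>"
  define K where "K = k N N"
  have K: "0 < K" unfolding K_def using weight_pos[OF N N] .
  have pos: "0 < \<epsilon> / (2 * K)" using \<open>0 < \<epsilon>\<close> K by simp
  obtain M where M: "\<And>n x p. M \<le> n \<Longrightarrow> 0 \<le> x \<Longrightarrow> 0 \<le> p \<Longrightarrow> \<bar>f x p - u n x p\<bar> \<le> \<epsilon> / (2 * K) * k x p"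
    using weighted_tendstoE[OF lim pos] by blast
  have "dist (u n x p) (f x p) < \<epsilon>" if "M \<le> n" "0 \<le> x" "0 \<le> p" "x < N" "p < N" for n x p
  proof -
    have "dist (u n x p) (f x p) \<le> \<epsilon> / (2 * K) * k x p"
      using M[OF that(1-3)] by (simp add: dist_real_def abs_minus_commute)
    also have "\<dots> \<le> \<epsilon> / (2 * K) * K"
      using incr2D[OF weight_incr that(2,3)] that(4,5) \<open>0 < \<epsilon>\<close> K
      by (intro mult_left_mono) (auto simp: K_def)
    finally show ?thesis using \<open>0 < \<epsilon>\<close> K by simp
  qed
  then show "\<exists>M. \<forall>n\<ge>M. \<forall>w\<in>Q \<inter> {w. fst w < N \<and> snd w < N}.
      dist (u n (fst w) (snd w)) (f (fst w) (snd w)) < \<epsilon>"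
    by (intro exI[of _ M] allI impI ballI) (auto simp: Q_def)
qed

lemma cont2_weighted_limit:
  assumes cont: "\<And>n. cont2 (u n)" and lim: "weighted_tendsto u f"
  shows "cont2 f"
proof -
  have "continuous (at z within Q) (\<lambda>w. f (fst w) (snd w))" if z: "z \<in> Q" for z
  proof -
    define N where "N = max (fst z) (snd z) + 1"
    define S where "S = Q \<inter> {w. fst w < N \<and> snd w < N}"
    have "0 \<le> N" "z \<in> S" using z by (cases z; auto simp: N_def S_def)+
    have "continuous_on S (\<lambda>w. u n (fst w) (snd w))" for n
      using cont[of n] by (auto simp: cont2_def S_def case_prod_unfold intro: continuous_on_subset)
    then have "continuous_on S (\<lambda>w. f (fst w) (snd w))"
      using weighted_tendsto_uniform_limit[OF lim \<open>0 \<le> N\<close>]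
      by (intro uniform_limit_theorem) (auto simp: S_def)
    moreover have "at z within Q = at z within S"
    proof (rule at_within_nhd)
      show "open {w :: real \<times> real. fst w < N \<and> snd w < N}"
        by (intro open_Collect_conj open_Collect_less continuous_intros)
    qed (use \<open>z \<in> S\<close> in \<open>auto simp: S_def\<close>)
    ultimately show ?thesis using \<open>z \<in> S\<close> by (simp add: continuous_on_eq_continuous_within)
  qed
  then show ?thesis
    unfolding cont2_def case_prod_unfold by (simp add: continuous_on_eq_continuous_within)
qed

lemma weighted_limit_in_CC:
  assumes u: "\<And>n. u n \<in> CC k"
    and pointwise: "\<And>x p. (\<lambda>n. u n x p) \<longlonglongrightarrow> f x p"
    and lim: "weighted_tendsto u f"
  shows "f \<in> CC k"
proof -
  have "cont2 f"
    using u by (intro cont2_weighted_limit[OF _ lim]) (auto simp: CC_def)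
  moreover have "incr2 f"
    unfolding incr2_def using LIMSEQ_le[OF pointwise pointwise] CC_incr[OF u] by blast
  moreover have "bdd_above ((\<lambda>z. \<bar>f (fst z) (snd z) / k (fst z) (snd z)\<bar>) ` Q)"
  proof -
    obtain N where N: "\<And>n x p. N \<le> n \<Longrightarrow> 0 \<le> x \<Longrightarrow> 0 \<le> p \<Longrightarrow> \<bar>f x p - u n x p\<bar> \<le> 1 * k x p"
      using weighted_tendstoE[OF lim zero_less_one] by blast
    obtain C where C: "\<And>x p. 0 \<le> x \<Longrightarrow> 0 \<le> p \<Longrightarrow> \<bar>u N x p\<bar> \<le> C * k x p"
      using CC_boundE[OF u] by blast
    have "\<bar>f x p\<bar> \<le> (C + 1) * k x p" if "0 \<le> x" "0 \<le> p" for x p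
      using N[OF order_refl that] C[OF that] by (simp add: distrib_right abs_le_iff)
    then show ?thesis by (rule weighted_bdd_aboveI)
  qed
  moreover have "f x p = 0" if "(x, p) \<notin> Q" for x p
    using LIMSEQ_unique[OF pointwise] CC_outside[OF u] that by simp
  ultimately show ?thesis by (simp add: CC_def)
qed

lemma weighted_Cauchy_convergent:
  assumes u: "\<And>n. u n \<in> CC k" and cauchy: "weighted_Cauchy u"
  obtains f where "\<And>x p. (\<lambda>n. u n x p) \<longlonglongrightarrow> f x p" "weighted_tendsto u f"
proof
  define f where "f x p = lim (\<lambda>n. u n x p)" for x p
  show pointwise: "(\<lambda>n. u n x p) \<longlonglongrightarrow> f x p" for x p
  proof (cases "0 \<le> x \<and> 0 \<le> p")
    case True
    then have kxp: "0 < k x p" using weight_pos by blast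
    have "Cauchy (\<lambda>n. u n x p)"
    proof (rule CauchyI)
      fix e :: real assume "0 < e"
      then have pos: "0 < e / (2 * k x p)" using kxp by simp
      obtain N where N: "\<And>n n' x' p'. N \<le> n \<Longrightarrow> N \<le> n' \<Longrightarrow> 0 \<le> x' \<Longrightarrow> 0 \<le> p' \<Longrightarrow>
          \<bar>u n' x' p' - u n x' p'\<bar> \<le> e / (2 * k x p) * k x' p'"
        using weighted_CauchyE[OF cauchy pos] by blast
      have "norm (u m x p - u n x p) < e" if "N \<le> m" "N \<le> n" for m n
      proof -
        have "\<bar>u m x p - u n x p\<bar> \<le> e / (2 * k x p) * k x p"
          using N[OF that(2,1)] True by blast
        then show ?thesis using kxp \<open>0 < e\<close> by simp
      qed
      then show "\<exists>M. \<forall>m\<ge>M. \<forall>n\<ge>M. norm (u m x p - u n x p) < e" by blast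
    qed
    then show ?thesis
      unfolding f_def by (simp add: Cauchy_convergent_iff convergent_LIMSEQ_iff)
  next
    case False
    then show ?thesis using CC_outside[OF u] by (simp add: f_def)
  qed
  show "weighted_tendsto u f"
    unfolding weighted_tendsto_def
  proof (intro allI impI)
    fix \<epsilon> :: real assume \<epsilon>: "0 < \<epsilon>"
    obtain N where N: "\<And>n n' x p. N \<le> n \<Longrightarrow> N \<le> n' \<Longrightarrow> 0 \<le> x \<Longrightarrow> 0 \<le> p \<Longrightarrow>
        \<bar>u n' x p - u n x p\<bar> \<le> \<epsilon> * k x p"
      using weighted_CauchyE[OF cauchy \<epsilon>] by blast
    have "\<bar>f x p - u n x p\<bar> \<le> \<epsilon> * k x p" if "N \<le> n" "0 \<le> x" "0 \<le> p" for n x p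
      by (rule LIMSEQ_le_const2[OF tendsto_rabs[OF tendsto_diff[OF pointwise tendsto_const]]])
         (use N that in \<open>auto intro!: exI[of _ N]\<close>)
    then show "\<exists>N. \<forall>n\<ge>N. \<forall>x p. 0 \<le> x \<longrightarrow> 0 \<le> p \<longrightarrow> \<bar>f x p - u n x p\<bar> \<le> \<epsilon> * k x p"
      by blast
  qed
qed

lemma MCauchy_imp_weighted_Cauchy:
  assumes "CC_metric.MCauchy u"
  shows "weighted_Cauchy u"
  unfolding weighted_Cauchy_def
proof (intro allI impI)
  fix \<epsilon> :: real assume "0 < \<epsilon>"
  then obtain N where N: "\<And>n n'. N \<le> n \<Longrightarrow> N \<le> n' \<Longrightarrow> \<bar>dk k (u n) (u n')\<bar> < \<epsilon>"
    using assms unfolding CC_metric.MCauchy_def by blast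
  have u: "u n \<in> CC k" for n
    using assms by (auto simp: CC_metric.MCauchy_def)
  have "\<bar>u n' x p - u n x p\<bar> \<le> \<epsilon> * k x p" if "N \<le> n" "N \<le> n'" "0 \<le> x" "0 \<le> p" for n n' x p
  proof -
    have "\<bar>u n' x p - u n x p\<bar> \<le> dk k (u n) (u n') * k x p"
      using dk_bound[OF u u that(3,4)] .
    also have "\<dots> \<le> \<epsilon> * k x p"
      using N[OF that(1,2)] weight_pos[OF that(3,4)] by (intro mult_right_mono) auto
    finally show ?thesis .
  qed
  then show "\<exists>N. \<forall>n\<ge>N. \<forall>n'\<ge>N. \<forall>x p. 0 \<le> x \<longrightarrow> 0 \<le> p \<longrightarrow> \<bar>u n' x p - u n x p\<bar> \<le> \<epsilon> * k x p"
    by blast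
qed

lemma mcomplete_CC: "CC_metric.mcomplete"
  unfolding CC_metric.mcomplete_def
proof (intro allI impI)
  fix u assume cauchy: "CC_metric.MCauchy u"
  then have u: "\<And>n. u n \<in> CC k" by (auto simp: CC_metric.MCauchy_def)
  obtain f where pointwise: "\<And>x p. (\<lambda>n. u n x p) \<longlonglongrightarrow> f x p" and lim: "weighted_tendsto u f"
    using weighted_Cauchy_convergent[OF u MCauchy_imp_weighted_Cauchy[OF cauchy]] by blast
  have f: "f \<in> CC k" by (rule weighted_limit_in_CC[OF u pointwise lim])
  have "\<forall>\<^sub>F n in sequentially. u n \<in> CC k \<and> \<bar>dk k (u n) f\<bar> < \<epsilon>" if \<epsilon>: "0 < \<epsilon>" for \<epsilon>
  proof -
    have pos: "0 < \<epsilon> / 2" using \<epsilon> by simp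
    obtain N where "\<And>n x p. N \<le> n \<Longrightarrow> 0 \<le> x \<Longrightarrow> 0 \<le> p \<Longrightarrow> \<bar>f x p - u n x p\<bar> \<le> \<epsilon> / 2 * k x p"
      using weighted_tendstoE[OF lim pos] by blast
    then have "dk k (u n) f \<le> \<epsilon> / 2" if "N \<le> n" for n
      using that by (intro dk_least) simp
    then have "u n \<in> CC k \<and> \<bar>dk k (u n) f\<bar> < \<epsilon>" if "N \<le> n" for n
      using that dk_nonneg[OF u f, of n] u \<epsilon> by fastforce
    then show ?thesis
      unfolding eventually_sequentially by blast
  qed
  with f show "\<exists>f. limitin CC_metric.mtopology u f sequentially"
    by (auto simp: CC_metric.limitin_metric)
qed

end

section \<open>Markov kernels on the half line\<close>

locale markov_kernel_Rp =
  fixes G :: "real \<Rightarrow> real measure"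
  assumes kernel: "G \<in> Rp \<rightarrow>\<^sub>M prob_algebra Rp"
begin

lemma kernel_subprob: "G \<in> Rp \<rightarrow>\<^sub>M subprob_algebra Rp"
  using kernel by (rule measurable_prob_algebraD)

lemma measurable_kpow: "kpow G n \<in> Rp \<rightarrow>\<^sub>M prob_algebra Rp"
proof (induction n)
  case 0
  then show ?case by (simp add: measurable_return_prob_space)
next
  case (Suc n)
  then show ?case by (simp add: measurable_bind_prob_space[OF Suc kernel])
qed

lemma kpow_subprob: "kpow G n \<in> Rp \<rightarrow>\<^sub>M subprob_algebra Rp"
  using measurable_kpow by (rule measurable_prob_algebraD)

lemma kpow_one: "0 \<le> x \<Longrightarrow> kpow G 1 x = G x"
  by (simp add: bind_return[OF kernel_subprob])

lemma
  assumes "0 \<le> x"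
  shows prob_space_kpow: "prob_space (kpow G n x)"
    and sets_kpow: "sets (kpow G n x) = sets Rp"
    and space_kpow: "space (kpow G n x) = {0..}"
proof -
  have "kpow G n x \<in> space (prob_algebra Rp)"
    using measurable_space[OF measurable_kpow] assms by simp
  then show "prob_space (kpow G n x)" and sets: "sets (kpow G n x) = sets Rp"
    by (simp_all add: space_prob_algebra)
  from sets_eq_imp_space_eq[OF sets] show "space (kpow G n x) = {0..}" by simp
qed

lemma
  assumes "0 \<le> x"
  shows prob_space_kernel: "prob_space (G x)"
    and sets_kernel: "sets (G x) = sets Rp"
    and space_kernel: "space (G x) = {0..}"
  unfolding kpow_one[OF assms, symmetric]
  by (rule prob_space_kpow[OF assms], rule sets_kpow[OF assms], rule space_kpow[OF assms])

lemma borel_measurable_kpowI: "f \<in> borel_measurable Rp \<Longrightarrow> 0 \<le> x \<Longrightarrow> f \<in> borel_measurable (kpow G n x)"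
  using measurable_cong_sets[OF sets_kpow refl] by blast

lemma borel_measurable_kernelI: "f \<in> borel_measurable Rp \<Longrightarrow> 0 \<le> x \<Longrightarrow> f \<in> borel_measurable (G x)"
  using measurable_cong_sets[OF sets_kernel refl] by blast

lemma kpow_Suc_left: "0 \<le> x \<Longrightarrow> kpow G (Suc n) x = G x \<bind> kpow G n"
proof (induction n)
  case 0
  then show ?case
    using bind_return''[OF sets_kernel[OF 0]] kpow_one[OF 0] by (simp add: fun_eq_iff)
next
  case (Suc n)
  have "kpow G n \<in> G x \<rightarrow>\<^sub>M subprob_algebra Rp"
    using kpow_subprob measurable_cong_sets[OF sets_kernel[OF Suc(2)] refl] by blast
  from bind_assoc[OF this kernel_subprob] show ?case using Suc by simp
qed

end

locale monotone_kernel_Rp = markov_kernel_Rp +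
  assumes kernel_mono: "\<And>a x x'. 0 \<le> a \<Longrightarrow> 0 \<le> x \<Longrightarrow> x \<le> x' \<Longrightarrow>
                   measure (G x') {0..a} \<le> measure (G x) {0..a}"
begin

lemma measure_atLeastAtMost_antimono:
  "0 \<le> x \<Longrightarrow> x \<le> x' \<Longrightarrow> measure (G x') {0..a} \<le> measure (G x) {0..a}"
  using kernel_mono[of a x x'] by (cases "0 \<le> a") auto

lemma measure_atLeastLessThan_antimono:
  assumes x: "0 \<le> x" "x \<le> x'"
  shows "measure (G x') {0..<a} \<le> measure (G x) {0..<a}"
proof -
  define A where "A n = {0..a - 1 / Suc n}" for n :: nat
  have "incseq A" unfolding A_def
    by (intro monoI) (auto simp: frac_le)
  have union: "(\<Union>n. A n) = {0..<a}"
  proof (intro equalityI subsetI)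
    fix y assume "y \<in> (\<Union>n. A n)"
    then obtain n where "0 \<le> y" "y \<le> a - 1 / Suc n" by (auto simp: A_def)
    moreover have "0 < 1 / real (Suc n)" by simp
    ultimately have "y < a" by linarith
    with \<open>0 \<le> y\<close> show "y \<in> {0..<a}" by simp
  next
    fix y assume y: "y \<in> {0..<a}"
    then obtain n where "1 / real (Suc n) < a - y"
      using reals_Archimedean[of "a - y"] by (auto simp: inverse_eq_divide)
    then have "y \<in> A n" using y by (auto simp: A_def)
    then show "y \<in> (\<Union>n. A n)" by blast
  qed
  have "(\<lambda>n. measure (G z) (A n)) \<longlonglongrightarrow> measure (G z) {0..<a}" if z: "0 \<le> z" for z
  proof -
    interpret prob_space "G z" by (rule prob_space_kernel[OF z])
    have "range A \<subseteq> events"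
      unfolding sets_kernel[OF z] A_def Rp_def by (auto simp: sets_restrict_space_iff)
    from finite_Lim_measure_incseq[OF this \<open>incseq A\<close>] show ?thesis by (simp add: union)
  qed
  from LIMSEQ_le[OF this[OF order_trans[OF x]] this[OF x(1)]] show ?thesis
    using x measure_atLeastAtMost_antimono by (auto simp: A_def)
qed

lemma measure_down_closed_antimono:
  assumes x: "0 \<le> x" "x \<le> x'" and D: "D \<subseteq> {0..}"
    and down: "\<And>y z. y \<in> D \<Longrightarrow> 0 \<le> z \<Longrightarrow> z \<le> y \<Longrightarrow> z \<in> D"
  shows "measure (G x') D \<le> measure (G x) D"
proof (rule down_closed_nonneg_cases[OF D down])
  assume "D = {}"
  then show ?thesis by simp
next
  assume D: "D = {0..}"
  have "measure (G z) D = 1" if "0 \<le> z" for z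
    using prob_space.prob_space[OF prob_space_kernel[OF that]] D by (simp add: space_kernel[OF that])
  then show ?thesis using x by simp
next
  fix a assume "D = {0..a}"
  then show ?thesis using measure_atLeastAtMost_antimono[OF x] by simp
next
  fix a assume "D = {0..<a}"
  then show ?thesis using measure_atLeastLessThan_antimono[OF x] by simp
qed

text \<open>First-order stochastic dominance, via the layer-cake formula: the superlevel sets of an
  increasing function are the complements of down-closed sets.\<close>
lemma nn_integral_kernel_mono:
  assumes x: "0 \<le> x" "x \<le> x'" and h[measurable]: "h \<in> borel_measurable Rp"
    and nn: "\<And>y. 0 \<le> y \<Longrightarrow> 0 \<le> h y"
    and mono: "\<And>y z. 0 \<le> y \<Longrightarrow> y \<le> z \<Longrightarrow> h y \<le> h z"
  shows "(\<integral>\<^sup>+ y. ennreal (h y) \<partial>G x) \<le> (\<integral>\<^sup>+ y. ennreal (h y) \<partial>G x')"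
proof -
  have x': "0 \<le> x'" using x by simp
  have level: "(\<integral>\<^sup>+ y. indicator {0..<h y} s \<partial>G x) \<le> (\<integral>\<^sup>+ y. indicator {0..<h y} s \<partial>G x')" for s
  proof (cases "0 \<le> s")
    case True
    define L where "L = {y \<in> space Rp. h y \<le> s}"
    have L: "L \<in> sets Rp" unfolding L_def by measurable
    have eq: "(\<integral>\<^sup>+ y. indicator {0..<h y} s \<partial>G z) = ennreal (1 - measure (G z) L)" if z: "0 \<le> z" for z
    proof -
      interpret prob_space "G z" by (rule prob_space_kernel[OF z])
      have L_event: "L \<in> events" using L by (simp add: sets_kernel[OF z])
      have "(\<integral>\<^sup>+ y. indicator {0..<h y} s \<partial>G z) = (\<integral>\<^sup>+ y. indicator (space (G z) - L) y \<partial>G z)"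
        using True by (intro nn_integral_cong) (auto simp: space_kernel[OF z] L_def indicator_def)
      also have "\<dots> = emeasure (G z) (space (G z) - L)"
        using sets.compl_sets[OF L_event] by simp
      also have "\<dots> = ennreal (1 - measure (G z) L)"
        using prob_compl[OF L_event] by (simp add: emeasure_eq_measure)
      finally show ?thesis .
    qed
    have "measure (G x') L \<le> measure (G x) L"
      by (rule measure_down_closed_antimono[OF x]) (auto simp: L_def intro: order_trans[OF mono])
    then show ?thesis unfolding eq[OF x(1)] eq[OF x'] by (simp add: ennreal_leI)
  qed simp
  have layer_cake: "(\<integral>\<^sup>+ y. ennreal (h y) \<partial>G z) = (\<integral>\<^sup>+ s. (\<integral>\<^sup>+ y. indicator {0..<h y} s \<partial>G z) \<partial>lborel)"
    if z: "0 \<le> z" for z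
    using prob_space_imp_sigma_finite[OF prob_space_kernel[OF z]] borel_measurable_kernelI[OF h z] nn
    by (rule nn_integral_layer_cake) (simp add: space_kernel[OF z])
  show ?thesis
    unfolding layer_cake[OF x(1)] layer_cake[OF x'] by (intro nn_integral_mono level)
qed

lemma integral_kernel_mono:
  fixes h :: "real \<Rightarrow> real"
  assumes x: "0 \<le> x" "x \<le> x'" and h[measurable]: "h \<in> borel_measurable Rp"
    and int: "integrable (G x) h" "integrable (G x') h"
    and mono: "\<And>y z. 0 \<le> y \<Longrightarrow> y \<le> z \<Longrightarrow> h y \<le> h z"
  shows "(\<integral>y. h y \<partial>G x) \<le> (\<integral>y. h y \<partial>G x')"
proof -
  have x': "0 \<le> x'" using x by simp
  define g where "g y = h y - h 0" for y
  have g_nn: "0 \<le> g y" if "0 \<le> y" for y using mono[OF order_refl that] by (simp add: g_def)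
  have g_int: "(\<integral>y. g y \<partial>G z) = (\<integral>y. h y \<partial>G z) - h 0"
    and g_nn_int: "ennreal (\<integral>y. g y \<partial>G z) = (\<integral>\<^sup>+ y. ennreal (g y) \<partial>G z)"
    if z: "0 \<le> z" "integrable (G z) h" for z
  proof -
    interpret prob_space "G z" by (rule prob_space_kernel[OF z(1)])
    show "(\<integral>y. g y \<partial>G z) = (\<integral>y. h y \<partial>G z) - h 0"
      using z(2) by (simp add: g_def prob_space)
    show "ennreal (\<integral>y. g y \<partial>G z) = (\<integral>\<^sup>+ y. ennreal (g y) \<partial>G z)"
      using z(2) g_nn by (intro nn_integral_eq_integral[symmetric]) (auto simp: g_def space_kernel[OF z(1)])
  qed
  have "(\<integral>\<^sup>+ y. ennreal (g y) \<partial>G x) \<le> (\<integral>\<^sup>+ y. ennreal (g y) \<partial>G x')"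
  proof (rule nn_integral_kernel_mono[OF x _ g_nn])
    show "g \<in> borel_measurable Rp" unfolding g_def by measurable
    show "g y \<le> g z" if "0 \<le> y" "y \<le> z" for y z
      using mono[OF that] by (simp add: g_def)
  qed
  moreover have "0 \<le> (\<integral>y. g y \<partial>G x')"
    by (rule integral_nonneg_AE, rule AE_I2) (simp add: g_nn space_kernel[OF x'])
  ultimately have "(\<integral>y. g y \<partial>G x) \<le> (\<integral>y. g y \<partial>G x')"
    unfolding g_nn_int[OF x(1) int(1), symmetric] g_nn_int[OF x' int(2), symmetric]
    by (simp add: ennreal_le_iff)
  then show ?thesis using g_int[OF x(1) int(1)] g_int[OF x' int(2)] by simp
qed

end

section \<open>The weight function\<close>

locale kappa_weight = monotone_kernel_Rp +
  fixes prof :: "real \<Rightarrow> real \<Rightarrow> real" and b \<delta> :: real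
  assumes prof_cont: "cont2 prof"
    and prof_incr: "incr2 prof"
    and prof_plus_b_ge_1: "\<And>x p. 0 \<le> x \<Longrightarrow> 0 \<le> p \<Longrightarrow> 1 \<le> prof x p + b"
    and prof_integrable: "\<And>x p t. 0 \<le> x \<Longrightarrow> 0 \<le> p \<Longrightarrow> integrable (kpow G t x) (\<lambda>y. prof y p)"
    and kappa_summable: "\<And>x p. 0 \<le> x \<Longrightarrow> 0 \<le> p \<Longrightarrow>
      summable (\<lambda>t. \<delta> ^ t * (\<integral>y. prof y p + b \<partial>kpow G t x))"
    and delta_pos: "0 < \<delta>"
begin

abbreviation \<kappa> :: "real \<Rightarrow> real \<Rightarrow> real" where "\<kappa> \<equiv> kappa G prof b \<delta>"

definition reward :: "nat \<Rightarrow> real \<Rightarrow> real \<Rightarrow> real" where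
  "reward t x p = (\<integral>y. prof y p + b \<partial>kpow G t x)"

lemma borel_measurable_prof [measurable]: "0 \<le> p \<Longrightarrow> (\<lambda>x. prof x p) \<in> borel_measurable Rp"
  by (rule borel_measurable_cont2_slice[OF prof_cont])

lemma integrable_reward:
  assumes "0 \<le> x" "0 \<le> p"
  shows "integrable (kpow G t x) (\<lambda>y. prof y p + b)"
proof -
  interpret prob_space "kpow G t x" by (rule prob_space_kpow[OF assms(1)])
  show ?thesis using prof_integrable[OF assms] by simp
qed

lemma reward_0: "0 \<le> x \<Longrightarrow> 0 \<le> p \<Longrightarrow> reward 0 x p = prof x p + b"
  by (simp add: reward_def integral_return)

lemma reward_ge_1:
  assumes "0 \<le> x" "0 \<le> p"
  shows "1 \<le> reward t x p"
proof -
  interpret prob_space "kpow G t x" by (rule prob_space_kpow[OF assms(1)])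
  have "(\<integral>y. 1 \<partial>kpow G t x) \<le> reward t x p"
    unfolding reward_def using assms prof_plus_b_ge_1
    by (intro integral_mono integrable_reward) (auto simp: space_kpow)
  then show ?thesis by (simp add: prob_space)
qed

lemma ennreal_reward:
  "0 \<le> x \<Longrightarrow> 0 \<le> p \<Longrightarrow> ennreal (reward t x p) = (\<integral>\<^sup>+ y. ennreal (prof y p + b) \<partial>kpow G t x)"
  unfolding reward_def
  by (rule nn_integral_eq_integral[symmetric, OF integrable_reward])
     (auto intro!: AE_I2 simp: space_kpow intro: order_trans[OF zero_le_one prof_plus_b_ge_1])

lemma borel_measurable_reward [measurable]: "0 \<le> p \<Longrightarrow> (\<lambda>x. reward t x p) \<in> borel_measurable Rp"
  unfolding reward_def
  by (rule measurable_compose[OF kpow_subprob integral_measurable_subprob_algebra]) simp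

lemma ennreal_reward_Suc:
  assumes x: "0 \<le> x" and p: "0 \<le> p"
  shows "ennreal (reward (Suc t) x p) = (\<integral>\<^sup>+ y. ennreal (reward t y p) \<partial>G x)"
proof -
  have "kpow G t \<in> G x \<rightarrow>\<^sub>M subprob_algebra Rp"
    using kpow_subprob measurable_cong_sets[OF sets_kernel[OF x] refl] by blast
  then have "(\<integral>\<^sup>+ y. ennreal (prof y p + b) \<partial>(G x \<bind> kpow G t))
      = (\<integral>\<^sup>+ y. (\<integral>\<^sup>+ z. ennreal (prof z p + b) \<partial>kpow G t y) \<partial>G x)"
    by (intro nn_integral_bind) (use p in measurable)
  also have "\<dots> = (\<integral>\<^sup>+ y. ennreal (reward t y p) \<partial>G x)"
    by (intro nn_integral_cong) (simp add: space_kernel[OF x] ennreal_reward p)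
  finally show ?thesis
    using ennreal_reward[OF x p, of "Suc t"] kpow_Suc_left[OF x] by simp
qed

lemma reward_mono_state: "0 \<le> x \<Longrightarrow> x \<le> x' \<Longrightarrow> 0 \<le> p \<Longrightarrow> reward t x p \<le> reward t x' p"
proof (induction t arbitrary: x x')
  case 0
  then show ?case using incr2D[OF prof_incr, of x p x' p] by (simp add: reward_0)
next
  case (Suc t)
  have x': "0 \<le> x'" using Suc by simp
  have "ennreal (reward (Suc t) x p) \<le> ennreal (reward (Suc t) x' p)"
    unfolding ennreal_reward_Suc[OF Suc(2,4)] ennreal_reward_Suc[OF x' Suc(4)]
  proof (rule nn_integral_kernel_mono[OF Suc(2,3)])
    show "0 \<le> reward t y p" if "0 \<le> y" for y
      using reward_ge_1[OF that Suc(4), of t] by simp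
  qed (use Suc in simp_all)
  then show ?case using reward_ge_1[OF x' Suc(4), of "Suc t"] by (simp add: ennreal_le_iff)
qed

lemma reward_mono_price: "0 \<le> x \<Longrightarrow> 0 \<le> p \<Longrightarrow> p \<le> p' \<Longrightarrow> reward t x p \<le> reward t x p'"
  unfolding reward_def
  by (rule integral_mono[OF integrable_reward integrable_reward])
     (auto simp: space_kpow intro: incr2D[OF prof_incr])

lemma kappa_sums: "0 \<le> x \<Longrightarrow> 0 \<le> p \<Longrightarrow> (\<lambda>t. \<delta> ^ t * reward t x p) sums \<kappa> x p"
  unfolding kappa_def reward_def using kappa_summable by (simp add: summable_sums)

lemma reward_term_nonneg: "0 \<le> x \<Longrightarrow> 0 \<le> p \<Longrightarrow> 0 \<le> \<delta> ^ t * reward t x p"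
  using delta_pos reward_ge_1[of x p t] by simp

lemma prof_plus_b_le_kappa:
  assumes "0 \<le> x" "0 \<le> p"
  shows "prof x p + b \<le> \<kappa> x p"
proof -
  have "(\<Sum>t\<in>{0}. \<delta> ^ t * reward t x p) \<le> (\<Sum>t. \<delta> ^ t * reward t x p)"
    by (rule sum_le_suminf) (use kappa_sums[OF assms] reward_term_nonneg[OF assms] in \<open>auto simp: sums_iff\<close>)
  then show ?thesis using reward_0[OF assms] sums_unique[OF kappa_sums[OF assms]] by simp
qed

lemma kappa_ge_1: "0 \<le> x \<Longrightarrow> 0 \<le> p \<Longrightarrow> 1 \<le> \<kappa> x p"
  using prof_plus_b_le_kappa prof_plus_b_ge_1 by (meson order_trans)

lemma borel_measurable_kappa [measurable]: "0 \<le> p \<Longrightarrow> (\<lambda>x. \<kappa> x p) \<in> borel_measurable Rp"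
  unfolding kappa_def reward_def[symmetric] by measurable

lemma kappa_incr: "incr2 \<kappa>"
  unfolding incr2_def
proof (intro allI impI, elim conjE)
  fix x p x' p' :: real assume le: "0 \<le> x" "0 \<le> p" "x \<le> x'" "p \<le> p'"
  have x': "0 \<le> x'" and p': "0 \<le> p'" using le by simp_all
  have "reward t x p \<le> reward t x' p'" for t
    using order_trans[OF reward_mono_state[OF le(1,3,2)] reward_mono_price[OF x' le(2,4)]] .
  then have "\<delta> ^ t * reward t x p \<le> \<delta> ^ t * reward t x' p'" for t
    using delta_pos by (intro mult_left_mono) auto
  from sums_le[OF this kappa_sums[OF le(1,2)] kappa_sums[OF x' p']]
  show "\<kappa> x p \<le> \<kappa> x' p'" .
qed

sublocale weight \<kappa>
proof
  show "0 < \<kappa> x p" if "0 \<le> x" "0 \<le> p" for x p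
    using kappa_ge_1[OF that] by simp
qed (rule kappa_incr)

lemma nn_integral_kappa_kernel:
  assumes x: "0 \<le> x" and p: "0 \<le> p"
  shows "(\<integral>\<^sup>+ y. ennreal (\<kappa> y p) \<partial>G x) = ennreal ((\<kappa> x p - (prof x p + b)) / \<delta>)"
proof -
  have "(\<integral>\<^sup>+ y. ennreal (\<kappa> y p) \<partial>G x) = (\<integral>\<^sup>+ y. (\<Sum>t. ennreal (\<delta> ^ t * reward t y p)) \<partial>G x)"
    using suminf_ennreal_eq[OF reward_term_nonneg kappa_sums] p
    by (intro nn_integral_cong) (simp add: space_kernel[OF x])
  also have "\<dots> = (\<Sum>t. \<integral>\<^sup>+ y. ennreal (\<delta> ^ t * reward t y p) \<partial>G x)"
    by (intro nn_integral_suminf borel_measurable_kernelI[OF _ x]) (use p in measurable)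
  also have "\<dots> = (\<Sum>t. ennreal (\<delta> ^ t * reward (Suc t) x p))"
  proof (intro suminf_cong)
    fix t
    have "(\<integral>\<^sup>+ y. ennreal (\<delta> ^ t * reward t y p) \<partial>G x)
        = (\<integral>\<^sup>+ y. ennreal (\<delta> ^ t) * ennreal (reward t y p) \<partial>G x)"
      using delta_pos by (simp add: ennreal_mult')
    also have "\<dots> = ennreal (\<delta> ^ t) * ennreal (reward (Suc t) x p)"
      by (subst nn_integral_cmult) (use p in \<open>simp_all add: borel_measurable_kernelI[OF _ x] ennreal_reward_Suc[OF x p]\<close>)
    finally show "(\<integral>\<^sup>+ y. ennreal (\<delta> ^ t * reward t y p) \<partial>G x) = ennreal (\<delta> ^ t * reward (Suc t) x p)"
      using delta_pos by (simp add: ennreal_mult')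
  qed
  also have "\<dots> = ennreal ((\<kappa> x p - (prof x p + b)) / \<delta>)"
  proof (rule suminf_ennreal_eq)
    show "0 \<le> \<delta> ^ t * reward (Suc t) x p" for t
      using reward_ge_1[OF x p, of "Suc t"] delta_pos by simp
    have "(\<lambda>t. \<delta> ^ Suc t * reward (Suc t) x p) sums (\<kappa> x p - (prof x p + b))"
      using kappa_sums[OF x p] sums_Suc_iff[of "\<lambda>t. \<delta> ^ t * reward t x p"] reward_0[OF x p] by simp
    from sums_divide[OF this, of \<delta>]
    show "(\<lambda>t. \<delta> ^ t * reward (Suc t) x p) sums ((\<kappa> x p - (prof x p + b)) / \<delta>)"
      using delta_pos by simp
  qed
  finally show ?thesis .
qed

lemma nn_integral_kappa_kernel_le:
  "0 \<le> x \<Longrightarrow> 0 \<le> p \<Longrightarrow> (\<integral>\<^sup>+ y. ennreal (\<kappa> y p) \<partial>G x) \<le> ennreal (\<kappa> x p / \<delta>)"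
  unfolding nn_integral_kappa_kernel
  using prof_plus_b_ge_1 delta_pos by (intro ennreal_leI divide_right_mono) fastforce+

lemma nn_integral_kappa_kpow_le:
  assumes x: "0 \<le> x" and p: "0 \<le> p"
  shows "(\<integral>\<^sup>+ y. ennreal (\<kappa> y p) \<partial>kpow G n x) \<le> ennreal (\<kappa> x p / \<delta> ^ n)"
proof (induction n)
  case 0
  then show ?case using x p by (simp add: nn_integral_return)
next
  case (Suc n)
  have "G \<in> kpow G n x \<rightarrow>\<^sub>M subprob_algebra Rp"
    using kernel_subprob measurable_cong_sets[OF sets_kpow[OF x] refl] by blast
  then have "(\<integral>\<^sup>+ y. ennreal (\<kappa> y p) \<partial>kpow G (Suc n) x)
      = (\<integral>\<^sup>+ y. (\<integral>\<^sup>+ z. ennreal (\<kappa> z p) \<partial>G y) \<partial>kpow G n x)"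
    by (simp only: kpow.simps, intro nn_integral_bind) (use p in measurable)
  also have "\<dots> \<le> (\<integral>\<^sup>+ y. ennreal (1 / \<delta>) * ennreal (\<kappa> y p) \<partial>kpow G n x)"
  proof (rule nn_integral_mono)
    fix y assume "y \<in> space (kpow G n x)"
    then have y: "0 \<le> y" by (simp add: space_kpow[OF x])
    show "(\<integral>\<^sup>+ z. ennreal (\<kappa> z p) \<partial>G y) \<le> ennreal (1 / \<delta>) * ennreal (\<kappa> y p)"
      using nn_integral_kappa_kernel_le[OF y p] delta_pos kappa_ge_1[OF y p]
      by (simp add: ennreal_mult[symmetric])
  qed
  also have "\<dots> = ennreal (1 / \<delta>) * (\<integral>\<^sup>+ y. ennreal (\<kappa> y p) \<partial>kpow G n x)"
    by (intro nn_integral_cmult borel_measurable_kpowI[OF _ x]) (use p in measurable)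
  also have "\<dots> \<le> ennreal (1 / \<delta>) * ennreal (\<kappa> x p / \<delta> ^ n)"
    using Suc by (intro mult_left_mono) auto
  also have "\<dots> = ennreal (\<kappa> x p / \<delta> ^ Suc n)"
    using delta_pos kappa_ge_1[OF x p] by (simp add: ennreal_mult[symmetric])
  finally show ?case .
qed

lemma weighted_bound_nonneg:
  assumes "\<And>y. 0 \<le> y \<Longrightarrow> \<bar>f y\<bar> \<le> C * \<kappa> y p" "0 \<le> p"
  shows "0 \<le> C"
proof -
  have "0 \<le> C * \<kappa> 0 p" using assms(1)[of 0] by simp
  then show ?thesis using kappa_ge_1[of 0 p] assms(2) by (simp add: zero_le_mult_iff)
qed

lemma
  assumes f: "f \<in> borel_measurable Rp" and bound: "\<And>y. 0 \<le> y \<Longrightarrow> \<bar>f y\<bar> \<le> C * \<kappa> y p"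
    and x: "0 \<le> x" and p: "0 \<le> p"
  shows integrable_kpow_weighted: "integrable (kpow G n x) f"
    and integral_kpow_weighted_bound: "\<bar>\<integral>y. f y \<partial>kpow G n x\<bar> \<le> C * \<kappa> x p / \<delta> ^ n"
proof -
  have C: "0 \<le> C" by (rule weighted_bound_nonneg[OF bound p])
  have kappa_nn: "AE y in kpow G n x. 0 \<le> \<kappa> y p"
    using kappa_ge_1 p by (intro AE_I2) (fastforce simp: space_kpow[OF x])
  have kappa_meas: "(\<lambda>y. \<kappa> y p) \<in> borel_measurable (kpow G n x)"
    by (intro borel_measurable_kpowI[OF _ x]) (use p in measurable)
  have kappa_int: "integrable (kpow G n x) (\<lambda>y. \<kappa> y p)"
    using nn_integral_kappa_kpow_le[OF x p, of n]
    by (intro integrableI_nonneg[OF kappa_meas kappa_nn]) (simp add: le_less_trans)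
  have "ennreal (\<integral>y. \<kappa> y p \<partial>kpow G n x) \<le> ennreal (\<kappa> x p / \<delta> ^ n)"
    using nn_integral_kappa_kpow_le[OF x p, of n] nn_integral_eq_integral[OF kappa_int kappa_nn] by simp
  then have kappa_integral: "(\<integral>y. \<kappa> y p \<partial>kpow G n x) \<le> \<kappa> x p / \<delta> ^ n"
    using kappa_ge_1[OF x p] delta_pos by (simp add: ennreal_le_iff)
  have bound': "\<And>y. y \<in> space (kpow G n x) \<Longrightarrow> \<bar>f y\<bar> \<le> C * \<kappa> y p"
    using bound by (simp add: space_kpow[OF x])
  show f_int: "integrable (kpow G n x) f"
  proof (rule Bochner_Integration.integrable_bound[OF _ borel_measurable_kpowI[OF f x]])
    show "integrable (kpow G n x) (\<lambda>y. C * \<kappa> y p)" using kappa_int by simp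
    show "AE y in kpow G n x. norm (f y) \<le> norm (C * \<kappa> y p)"
      using bound' by (intro AE_I2) (auto intro: order_trans[OF _ abs_ge_self])
  qed
  have "\<bar>\<integral>y. f y \<partial>kpow G n x\<bar> \<le> (\<integral>y. C * \<kappa> y p \<partial>kpow G n x)"
    using kappa_int by (intro integral_abs_bound_integral[OF f_int] bound') simp
  also have "\<dots> \<le> C * (\<kappa> x p / \<delta> ^ n)"
    using mult_left_mono[OF kappa_integral C] by simp
  finally show "\<bar>\<integral>y. f y \<partial>kpow G n x\<bar> \<le> C * \<kappa> x p / \<delta> ^ n" by simp
qed

lemma
  assumes "f \<in> borel_measurable Rp" "\<And>y. 0 \<le> y \<Longrightarrow> \<bar>f y\<bar> \<le> C * \<kappa> y p" "0 \<le> x" "0 \<le> p"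
  shows integrable_kernel_weighted: "integrable (G x) f"
    and integral_kernel_weighted_bound: "\<bar>\<integral>y. f y \<partial>G x\<bar> \<le> C * \<kappa> x p / \<delta>"
  using integrable_kpow_weighted[OF assms, of 1] integral_kpow_weighted_bound[OF assms, of 1]
  by (simp_all only: kpow_one[OF assms(3)] power_one_right)

lemma borel_measurable_integral_kernel:
  fixes f :: "real \<Rightarrow> real"
  assumes "f \<in> borel_measurable Rp"
  shows "(\<lambda>y. \<integral>z. f z \<partial>G y) \<in> borel_measurable Rp"
  by (rule measurable_compose[OF kernel_subprob integral_measurable_subprob_algebra[OF assms]])

lemma integrable_kpow_integral_kernel:
  assumes f: "f \<in> borel_measurable Rp" and bound: "\<And>y. 0 \<le> y \<Longrightarrow> \<bar>f y\<bar> \<le> C * \<kappa> y p"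
    and x: "0 \<le> x" and p: "0 \<le> p"
  shows "integrable (kpow G n x) (\<lambda>y. \<integral>z. f z \<partial>G y)"
  using integral_kernel_weighted_bound[OF f bound _ p]
  by (intro integrable_kpow_weighted[OF borel_measurable_integral_kernel[OF f] _ x p, of "C / \<delta>"]) simp

lemma integral_kpow_Suc_weighted_nonneg:
  assumes g: "g \<in> borel_measurable Rp" and bound: "\<And>y. 0 \<le> y \<Longrightarrow> 0 \<le> g y \<and> g y \<le> C * \<kappa> y p"
    and x: "0 \<le> x" and p: "0 \<le> p"
  shows "(\<integral>y. g y \<partial>kpow G (Suc n) x) = (\<integral>y. (\<integral>z. g z \<partial>G y) \<partial>kpow G n x)"
proof -
  have abs_bound: "\<And>y. 0 \<le> y \<Longrightarrow> \<bar>g y\<bar> \<le> C * \<kappa> y p" using bound by auto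
  have inner_nn: "0 \<le> (\<integral>z. g z \<partial>G y)" if "0 \<le> y" for y
    using bound by (intro integral_nonneg_AE AE_I2) (simp add: space_kernel[OF that])
  have "G \<in> kpow G n x \<rightarrow>\<^sub>M subprob_algebra Rp"
    using kernel_subprob measurable_cong_sets[OF sets_kpow[OF x] refl] by blast
  have "ennreal (\<integral>y. g y \<partial>kpow G (Suc n) x) = (\<integral>\<^sup>+ y. ennreal (g y) \<partial>kpow G (Suc n) x)"
    using integrable_kpow_weighted[OF g abs_bound x p] bound
    by (intro nn_integral_eq_integral[symmetric] AE_I2) (auto simp del: kpow.simps simp: space_kpow[OF x])
  also have "\<dots> = (\<integral>\<^sup>+ y. (\<integral>\<^sup>+ z. ennreal (g z) \<partial>G y) \<partial>kpow G n x)"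
    using \<open>G \<in> kpow G n x \<rightarrow>\<^sub>M subprob_algebra Rp\<close>
    by (simp only: kpow.simps, intro nn_integral_bind) (use g in measurable)
  also have "\<dots> = (\<integral>\<^sup>+ y. ennreal (\<integral>z. g z \<partial>G y) \<partial>kpow G n x)"
  proof (rule nn_integral_cong)
    fix y assume "y \<in> space (kpow G n x)"
    then have y: "0 \<le> y" by (simp add: space_kpow[OF x])
    show "(\<integral>\<^sup>+ z. ennreal (g z) \<partial>G y) = ennreal (\<integral>z. g z \<partial>G y)"
      using integrable_kernel_weighted[OF g abs_bound y p] bound
      by (intro nn_integral_eq_integral AE_I2) (auto simp: space_kernel[OF y])
  qed
  also have "\<dots> = ennreal (\<integral>y. (\<integral>z. g z \<partial>G y) \<partial>kpow G n x)"
    using integrable_kpow_integral_kernel[OF g abs_bound x p] inner_nn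
    by (intro nn_integral_eq_integral AE_I2) (auto simp: space_kpow[OF x])
  finally have "ennreal (\<integral>y. g y \<partial>kpow G (Suc n) x) = ennreal (\<integral>y. (\<integral>z. g z \<partial>G y) \<partial>kpow G n x)" .
  moreover have "0 \<le> (\<integral>y. g y \<partial>kpow G (Suc n) x)"
    by (intro integral_nonneg_AE AE_I2) (simp del: kpow.simps add: space_kpow[OF x] bound)
  moreover have "0 \<le> (\<integral>y. (\<integral>z. g z \<partial>G y) \<partial>kpow G n x)"
    by (rule integral_nonneg_AE, rule AE_I2) (simp add: space_kpow[OF x] inner_nn)
  ultimately show ?thesis by simp
qed

lemma integral_kpow_Suc_weighted:
  assumes f: "f \<in> borel_measurable Rp" and bound: "\<And>y. 0 \<le> y \<Longrightarrow> \<bar>f y\<bar> \<le> C * \<kappa> y p"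
    and x: "0 \<le> x" and p: "0 \<le> p"
  shows "(\<integral>y. f y \<partial>kpow G (Suc n) x) = (\<integral>y. (\<integral>z. f z \<partial>G y) \<partial>kpow G n x)"
proof -
  have C: "0 \<le> C" by (rule weighted_bound_nonneg[OF bound p])
  define g where "g y = f y + C * \<kappa> y p" for y
  define h where "h y = C * \<kappa> y p" for y
  have g: "g \<in> borel_measurable Rp" and h: "h \<in> borel_measurable Rp"
    unfolding g_def h_def using f p by measurable
  have g_bound: "0 \<le> g y \<and> g y \<le> (2 * C) * \<kappa> y p" if "0 \<le> y" for y
    using bound[OF that] by (auto simp: g_def abs_le_iff)
  have h_bound: "0 \<le> h y \<and> h y \<le> C * \<kappa> y p" if "0 \<le> y" for y
    using C kappa_ge_1[OF that p] by (simp add: h_def)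
  have g_abs: "\<bar>g y\<bar> \<le> (2 * C) * \<kappa> y p" and h_abs: "\<bar>h y\<bar> \<le> C * \<kappa> y p" if "0 \<le> y" for y
    using g_bound[OF that] h_bound[OF that] by auto
  have f_eq: "f = (\<lambda>y. g y - h y)" by (simp add: g_def h_def fun_eq_iff)
  have inner: "(\<integral>z. f z \<partial>G y) = (\<integral>z. g z \<partial>G y) - (\<integral>z. h z \<partial>G y)" if "0 \<le> y" for y
    unfolding f_eq
    by (intro Bochner_Integration.integral_diff integrable_kernel_weighted[OF g g_abs that p]
        integrable_kernel_weighted[OF h h_abs that p])
  have "(\<integral>y. f y \<partial>kpow G (Suc n) x) = (\<integral>y. g y \<partial>kpow G (Suc n) x) - (\<integral>y. h y \<partial>kpow G (Suc n) x)"
    unfolding f_eq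
    by (intro Bochner_Integration.integral_diff integrable_kpow_weighted[OF g g_abs x p]
        integrable_kpow_weighted[OF h h_abs x p])
  also have "\<dots> = (\<integral>y. (\<integral>z. g z \<partial>G y) \<partial>kpow G n x) - (\<integral>y. (\<integral>z. h z \<partial>G y) \<partial>kpow G n x)"
    using integral_kpow_Suc_weighted_nonneg[OF g g_bound x p]
      integral_kpow_Suc_weighted_nonneg[OF h h_bound x p] by simp
  also have "\<dots> = (\<integral>y. (\<integral>z. g z \<partial>G y) - (\<integral>z. h z \<partial>G y) \<partial>kpow G n x)"
    by (intro Bochner_Integration.integral_diff[symmetric] integrable_kpow_integral_kernel[OF g g_abs x p]
        integrable_kpow_integral_kernel[OF h h_abs x p])
  also have "\<dots> = (\<integral>y. (\<integral>z. f z \<partial>G y) \<partial>kpow G n x)"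
    by (intro Bochner_Integration.integral_cong refl) (simp add: inner space_kpow[OF x])
  finally show ?thesis .
qed

text \<open>Iterating the subsolution inequality gains a factor \<open>\<beta>/\<delta>\<close> per step.\<close>
lemma weighted_subsolution_eq_0:
  assumes \<beta>: "0 \<le> \<beta>" "\<beta> < \<delta>" and p: "0 \<le> p" and d: "d \<in> borel_measurable Rp"
    and bound: "\<And>y. 0 \<le> y \<Longrightarrow> 0 \<le> d y \<and> d y \<le> C * \<kappa> y p"
    and sub: "\<And>y. 0 \<le> y \<Longrightarrow> d y \<le> \<beta> * (\<integral>z. d z \<partial>G y)"
    and x: "0 \<le> x"
  shows "d x = 0"
proof -
  have iterate: "d y \<le> C * (\<beta> / \<delta>) ^ n * \<kappa> y p" if "0 \<le> y" for n y
    using that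
  proof (induction n arbitrary: y)
    case 0
    then show ?case using bound by simp
  next
    case (Suc n)
    have "\<bar>\<integral>z. d z \<partial>G y\<bar> \<le> C * (\<beta> / \<delta>) ^ n * \<kappa> y p / \<delta>"
      using Suc.IH bound by (intro integral_kernel_weighted_bound[OF d _ Suc.prems p]) auto
    then have "\<beta> * (\<integral>z. d z \<partial>G y) \<le> \<beta> * (C * (\<beta> / \<delta>) ^ n * \<kappa> y p / \<delta>)"
      using \<beta>(1) by (intro mult_left_mono) auto
    then show ?case using sub[OF Suc.prems] by (simp add: field_simps)
  qed
  have "(\<lambda>n. C * \<kappa> x p * (\<beta> / \<delta>) ^ n) \<longlonglongrightarrow> C * \<kappa> x p * 0"
    using \<beta> delta_pos by (intro tendsto_mult_left LIMSEQ_power_zero) simp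
  moreover have "d x \<le> C * \<kappa> x p * (\<beta> / \<delta>) ^ n" for n
    using iterate[OF x, of n] by (simp add: mult_ac)
  ultimately have "d x \<le> C * \<kappa> x p * 0"
    by (intro LIMSEQ_le_const) auto
  then show ?thesis using bound[OF x] by simp
qed

end

section \<open>The Bellman operator\<close>

locale bellman_model = kappa_weight +
  fixes \<beta> :: real
  assumes beta_pos: "0 < \<beta>" and beta_lt_delta: "\<beta> < \<delta>"
    and prof_strict_incr: "strict_incr2 prof"
    and prof_neg: "\<And>x p. 0 \<le> x \<Longrightarrow> 0 \<le> p \<Longrightarrow> x = 0 \<or> p = 0 \<Longrightarrow> prof x p < 0"
    and integral_kernel_cont: "\<And>u. u \<in> CC \<kappa> \<Longrightarrow> continuous_on Q (\<lambda>(x, p). \<integral>y. u y p \<partial>G x)"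
begin

abbreviation T :: "(real \<Rightarrow> real \<Rightarrow> real) \<Rightarrow> real \<Rightarrow> real \<Rightarrow> real" where
  "T \<equiv> bellman G prof \<beta>"

lemma bellman_eq: "0 \<le> x \<Longrightarrow> 0 \<le> p \<Longrightarrow> T v x p = prof x p + \<beta> * max 0 (\<integral>y. v y p \<partial>G x)"
  by (simp add: bellman_def)

lemma bellman_outside: "\<not> (0 \<le> x \<and> 0 \<le> p) \<Longrightarrow> T v x p = 0"
  unfolding bellman_def by auto

lemma integrable_kernel_CC:
  assumes v: "v \<in> CC \<kappa>" and x: "0 \<le> x" and p: "0 \<le> p"
  shows "integrable (G x) (\<lambda>y. v y p)"
proof -
  obtain C where "\<And>x p. 0 \<le> x \<Longrightarrow> 0 \<le> p \<Longrightarrow> \<bar>v x p\<bar> \<le> C * \<kappa> x p"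
    using CC_boundE[OF v] by blast
  with p show ?thesis by (intro integrable_kernel_weighted[OF borel_measurable_CC[OF v p] _ x p])
qed

lemma integral_kernel_CC_mono:
  assumes v: "v \<in> CC \<kappa>" and le: "0 \<le> x" "x \<le> x'" "0 \<le> p" "p \<le> p'"
  shows "(\<integral>y. v y p \<partial>G x) \<le> (\<integral>y. v y p' \<partial>G x')"
proof -
  have x': "0 \<le> x'" and p': "0 \<le> p'" using le by auto
  have "(\<integral>y. v y p \<partial>G x) \<le> (\<integral>y. v y p' \<partial>G x)"
    using CC_incr[OF v _ le(3) _ le(4)]
    by (intro integral_mono integrable_kernel_CC[OF v le(1,3)] integrable_kernel_CC[OF v le(1) p'])
       (simp add: space_kernel[OF le(1)])
  also have "\<dots> \<le> (\<integral>y. v y p' \<partial>G x')"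
    using CC_incr[OF v _ p'] 
    by (intro integral_kernel_mono[OF le(1,2) borel_measurable_CC[OF v p']]
        integrable_kernel_CC[OF v le(1) p'] integrable_kernel_CC[OF v x' p']) simp
  finally show ?thesis .
qed

lemma prof_weighted_bound:
  assumes "0 \<le> x" "0 \<le> p"
  shows "\<bar>prof x p\<bar> \<le> (1 + \<bar>b\<bar>) * \<kappa> x p"
proof -
  have "1 \<le> prof x p + b" "prof x p + b \<le> \<kappa> x p" "1 \<le> \<kappa> x p"
    using prof_plus_b_ge_1[OF assms] prof_plus_b_le_kappa[OF assms] kappa_ge_1[OF assms] by auto
  moreover have "\<bar>b\<bar> \<le> \<bar>b\<bar> * \<kappa> x p"
    using \<open>1 \<le> \<kappa> x p\<close> mult_left_mono[of 1 "\<kappa> x p" "\<bar>b\<bar>"] by simp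
  ultimately show ?thesis by (simp add: distrib_right abs_le_iff)
qed

lemma bellman_CC:
  assumes v: "v \<in> CC \<kappa>"
  shows "T v \<in> CC \<kappa>"
proof -
  obtain C where C: "\<And>x p. 0 \<le> x \<Longrightarrow> 0 \<le> p \<Longrightarrow> \<bar>v x p\<bar> \<le> C * \<kappa> x p"
    using CC_boundE[OF v] by blast
  have "cont2 (T v)"
    unfolding cont2_def
  proof (rule continuous_on_eq)
    show "continuous_on Q (\<lambda>z. prof (fst z) (snd z) + \<beta> * max 0 (\<integral>y. v y (snd z) \<partial>G (fst z)))"
      using prof_cont integral_kernel_cont[OF v]
      by (intro continuous_intros) (simp_all add: cont2_def case_prod_unfold)
    show "prof (fst z) (snd z) + \<beta> * max 0 (\<integral>y. v y (snd z) \<partial>G (fst z)) = (case z of (x, p) \<Rightarrow> T v x p)"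
      if "z \<in> Q" for z
      using that by (cases z) (simp add: bellman_eq)
  qed
  moreover have "incr2 (T v)"
    unfolding incr2_def
  proof (intro allI impI, elim conjE)
    fix x p x' p' :: real assume le: "0 \<le> x" "0 \<le> p" "x \<le> x'" "p \<le> p'"
    then show "T v x p \<le> T v x' p'"
      using incr2D[OF prof_incr le] integral_kernel_CC_mono[OF v le(1,3,2,4)] beta_pos
      by (simp add: bellman_eq add_mono mult_left_mono)
  qed
  moreover have "bdd_above ((\<lambda>z. \<bar>T v (fst z) (snd z) / \<kappa> (fst z) (snd z)\<bar>) ` Q)"
  proof (rule weighted_bdd_aboveI)
    fix x p :: real assume x: "0 \<le> x" and p: "0 \<le> p"
    have "\<bar>\<integral>y. v y p \<partial>G x\<bar> \<le> C * \<kappa> x p / \<delta>"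
      using C p by (intro integral_kernel_weighted_bound[OF borel_measurable_CC[OF v p] _ x p])
    then have "\<beta> * \<bar>max 0 (\<integral>y. v y p \<partial>G x)\<bar> \<le> \<beta> * (C * \<kappa> x p / \<delta>)"
      using beta_pos by (intro mult_left_mono) auto
    then show "\<bar>T v x p\<bar> \<le> (1 + \<bar>b\<bar> + \<beta> * C / \<delta>) * \<kappa> x p"
      using prof_weighted_bound[OF x p] beta_pos
      by (simp add: bellman_eq[OF x p] abs_mult algebra_simps
          order_trans[OF abs_triangle_ineq])
  qed
  ultimately show ?thesis by (simp add: CC_def bellman_outside)
qed

lemma bellman_dist_bound:
  assumes v: "v \<in> CC \<kappa>" and w: "w \<in> CC \<kappa>" and x: "0 \<le> x" and p: "0 \<le> p"
  shows "\<bar>T w x p - T v x p\<bar> \<le> \<beta> / \<delta> * dk \<kappa> v w * \<kappa> x p"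
proof -
  let ?I = "\<lambda>u. \<integral>y. u y p \<partial>G x"
  have "?I w - ?I v = (\<integral>y. w y p - v y p \<partial>G x)"
    using integrable_kernel_CC[OF w x p] integrable_kernel_CC[OF v x p] by simp
  also have "\<bar>\<dots>\<bar> \<le> dk \<kappa> v w * \<kappa> x p / \<delta>"
    using borel_measurable_CC[OF v p] borel_measurable_CC[OF w p] dk_bound[OF v w _ p]
    by (intro integral_kernel_weighted_bound[OF _ _ x p]) auto
  finally have "\<bar>max 0 (?I w) - max 0 (?I v)\<bar> \<le> dk \<kappa> v w * \<kappa> x p / \<delta>"
    by (simp add: max_def abs_le_iff)
  then have "\<beta> * \<bar>max 0 (?I w) - max 0 (?I v)\<bar> \<le> \<beta> * (dk \<kappa> v w * \<kappa> x p / \<delta>)"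
    using beta_pos by (intro mult_left_mono) auto
  then show ?thesis
    using beta_pos by (simp add: bellman_eq[OF x p] abs_mult right_diff_distrib[symmetric])
qed

lemma bellman_contraction:
  "v \<in> CC \<kappa> \<Longrightarrow> w \<in> CC \<kappa> \<Longrightarrow> dk \<kappa> (T v) (T w) \<le> \<beta> / \<delta> * dk \<kappa> v w"
  by (rule dk_least) (rule bellman_dist_bound)

lemma bellman_unique_fixpoint: "\<exists>!v. v \<in> CC \<kappa> \<and> T v = v"
proof -
  have maps: "T \<in> CC \<kappa> \<rightarrow> CC \<kappa>" using bellman_CC by blast
  have lt: "\<beta> / \<delta> < 1" using beta_lt_delta delta_pos by simp
  have contr: "\<bar>dk \<kappa> (T v) (T w)\<bar> \<le> \<beta> / \<delta> * \<bar>dk \<kappa> v w\<bar>" if "v \<in> CC \<kappa>" "w \<in> CC \<kappa>" for v w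
    using bellman_contraction[OF that] dk_nonneg[OF bellman_CC bellman_CC, OF that] dk_nonneg[OF that]
    by simp
  obtain v where "v \<in> CC \<kappa>" "T v = v"
    using CC_metric.Banach_fixedpoint_thm[OF mcomplete_CC _ maps lt contr] zero_in_CC by blast
  moreover have "v = w" if "v \<in> CC \<kappa>" "T v = v" "w \<in> CC \<kappa>" "T w = w" for v w
    using CC_metric.contraction_imp_unique_fixpoint[OF that(2,4) maps lt contr that(1,3)] .
  ultimately show ?thesis by blast
qed

lemma fixpoint_eq: "T v = v \<Longrightarrow> 0 \<le> x \<Longrightarrow> 0 \<le> p \<Longrightarrow> v x p = prof x p + \<beta> * max 0 (\<integral>y. v y p \<partial>G x)"
  using bellman_eq[of x p v] by simp

lemma fixpoint_strict_incr:
  assumes v: "v \<in> CC \<kappa>" "T v = v"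
  shows "strict_incr2 v"
  unfolding strict_incr2_def
proof (intro allI impI, elim conjE)
  fix x p x' p' :: real
  assume le: "0 \<le> x" "0 \<le> p" "x \<le> x'" "p \<le> p'" "(x, p) \<noteq> (x', p')"
  have "prof x p < prof x' p'" using prof_strict_incr le unfolding strict_incr2_def by blast
  moreover have "\<beta> * max 0 (\<integral>y. v y p \<partial>G x) \<le> \<beta> * max 0 (\<integral>y. v y p' \<partial>G x')"
    using integral_kernel_CC_mono[OF v(1) le(1,3,2,4)] beta_pos by (intro mult_left_mono) auto
  ultimately show "v x p < v x' p'"
    using fixpoint_eq[OF v(2) le(1,2)] fixpoint_eq[OF v(2), of x' p'] le by simp
qed

lemma fixpoint_excess_subsolution:
  assumes v: "v \<in> CC \<kappa>" "T v = v" and y: "0 \<le> y"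
  shows "\<bar>v y 0 - prof y 0\<bar> \<le> \<beta> * (\<integral>z. \<bar>v z 0 - prof z 0\<bar> \<partial>G y)"
proof -
  have z: "(0::real) \<le> 0" by simp
  have int_v: "integrable (G y) (\<lambda>z. v z 0)" by (rule integrable_kernel_CC[OF v(1) y z])
  have int_prof: "integrable (G y) (\<lambda>z. prof z 0)"
    using prof_weighted_bound z by (intro integrable_kernel_weighted[OF _ _ y z]) auto
  have "(\<integral>z. prof z 0 \<partial>G y) \<le> (\<integral>z. 0 \<partial>G y)"
    using prof_neg[OF _ z] by (intro integral_mono int_prof) (auto simp: space_kernel[OF y] less_imp_le)
  then have "(\<integral>z. v z 0 \<partial>G y) \<le> (\<integral>z. v z 0 - prof z 0 \<partial>G y)"
    using int_v int_prof by simp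
  also have "\<dots> \<le> (\<integral>z. \<bar>v z 0 - prof z 0\<bar> \<partial>G y)"
    using int_v int_prof by (intro integral_mono) auto
  moreover have "0 \<le> (\<integral>z. \<bar>v z 0 - prof z 0\<bar> \<partial>G y)" by simp
  ultimately have "max 0 (\<integral>z. v z 0 \<partial>G y) \<le> (\<integral>z. \<bar>v z 0 - prof z 0\<bar> \<partial>G y)" by simp
  then show ?thesis
    using fixpoint_eq[OF v(2) y z] beta_pos by (simp add: abs_mult mult_left_mono)
qed

lemma fixpoint_neg_price_0:
  assumes v: "v \<in> CC \<kappa>" "T v = v" and x: "0 \<le> x"
  shows "v x 0 < 0"
proof -
  have z: "(0::real) \<le> 0" by simp
  obtain C where C: "\<And>y p. 0 \<le> y \<Longrightarrow> 0 \<le> p \<Longrightarrow> \<bar>v y p\<bar> \<le> C * \<kappa> y p"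
    using CC_boundE[OF v(1)] by blast
  define d where "d y = \<bar>v y 0 - prof y 0\<bar>" for y
  have d: "d \<in> borel_measurable Rp"
    unfolding d_def using borel_measurable_CC[OF v(1) z] by measurable
  have d_bound: "0 \<le> d y \<and> d y \<le> (C + (1 + \<bar>b\<bar>)) * \<kappa> y 0" if y: "0 \<le> y" for y
  proof -
    have "d y \<le> \<bar>v y 0\<bar> + \<bar>prof y 0\<bar>" unfolding d_def by (rule abs_triangle_ineq4)
    moreover have "(C + (1 + \<bar>b\<bar>)) * \<kappa> y 0 = C * \<kappa> y 0 + (1 + \<bar>b\<bar>) * \<kappa> y 0"
      by (rule distrib_right)
    ultimately show ?thesis
      using C[OF y z] prof_weighted_bound[OF y z] by (simp add: d_def)
  qed
  have "d y \<le> \<beta> * (\<integral>z. d z \<partial>G y)" if "0 \<le> y" for y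
    using fixpoint_excess_subsolution[OF v that] by (simp add: d_def)
  then have "d x = 0"
    using beta_pos beta_lt_delta d_bound by (intro weighted_subsolution_eq_0[OF _ _ z d _ _ x]) auto
  then show ?thesis using prof_neg[OF x z] by (simp add: d_def)
qed

text \<open>Continuation that is strictly valuable at the least productive state is valuable at every
  state, so the maximum in the Bellman equation can be dropped.\<close>
lemma fixpoint_kpow_recursion:
  assumes v: "v \<in> CC \<kappa>" "T v = v" and p: "0 \<le> p" and continue: "0 < (\<integral>y. v y p \<partial>G 0)"
  shows "(\<integral>y. v y p \<partial>kpow G n 0)
       = (\<integral>y. prof y p \<partial>kpow G n 0) + \<beta> * (\<integral>y. v y p \<partial>kpow G (Suc n) 0)"
proof -
  have z: "(0::real) \<le> 0" by simp
  obtain C where C: "\<And>y p. 0 \<le> y \<Longrightarrow> 0 \<le> p \<Longrightarrow> \<bar>v y p\<bar> \<le> C * \<kappa> y p"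
    using CC_boundE[OF v(1)] by blast
  have vm: "(\<lambda>y. v y p) \<in> borel_measurable Rp" by (rule borel_measurable_CC[OF v(1) p])
  have vb: "\<And>y. 0 \<le> y \<Longrightarrow> \<bar>v y p\<bar> \<le> C * \<kappa> y p" using C p by simp
  define I where "I y = (\<integral>z. v z p \<partial>G y)" for y
  have v_eq: "v y p = prof y p + \<beta> * I y" if y: "0 \<le> y" for y
  proof -
    have "I 0 \<le> I y" unfolding I_def by (rule integral_kernel_CC_mono[OF v(1) order_refl y p order_refl])
    then show ?thesis using continue fixpoint_eq[OF v(2) y p] by (simp add: I_def)
  qed
  have "(\<integral>y. v y p \<partial>kpow G n 0) = (\<integral>y. prof y p + \<beta> * I y \<partial>kpow G n 0)"
    by (rule Bochner_Integration.integral_cong) (simp_all add: v_eq space_kpow)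
  also have "\<dots> = (\<integral>y. prof y p \<partial>kpow G n 0) + \<beta> * (\<integral>y. I y \<partial>kpow G n 0)"
    using prof_integrable[OF z p, of n] integrable_kpow_integral_kernel[OF vm vb z p, of n]
    by (simp add: I_def)
  also have "(\<integral>y. I y \<partial>kpow G n 0) = (\<integral>y. v y p \<partial>kpow G (Suc n) 0)"
    unfolding I_def by (rule integral_kpow_Suc_weighted[OF vm vb z p, symmetric])
  finally show ?thesis .
qed

lemma fixpoint_sums_discounted_profits:
  assumes v: "v \<in> CC \<kappa>" "T v = v" and p: "0 \<le> p" and continue: "0 < (\<integral>y. v y p \<partial>G 0)"
  shows "(\<lambda>t. \<beta> ^ t * (\<integral>y. prof y p \<partial>kpow G t 0)) sums v 0 p"
proof -
  have z: "(0::real) \<le> 0" by simp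
  obtain C where C: "\<And>y p. 0 \<le> y \<Longrightarrow> 0 \<le> p \<Longrightarrow> \<bar>v y p\<bar> \<le> C * \<kappa> y p"
    using CC_boundE[OF v(1)] by blast
  have vm: "(\<lambda>y. v y p) \<in> borel_measurable Rp" by (rule borel_measurable_CC[OF v(1) p])
  have vb: "\<And>y. 0 \<le> y \<Longrightarrow> \<bar>v y p\<bar> \<le> C * \<kappa> y p" using C p by simp
  define V where "V n = (\<integral>y. v y p \<partial>kpow G n 0)" for n
  have partial: "(\<Sum>t<n. \<beta> ^ t * (\<integral>y. prof y p \<partial>kpow G t 0)) = v 0 p - \<beta> ^ n * V n" for n
  proof (induction n)
    case 0
    show ?case using vm by (simp add: V_def integral_return)
  next
    case (Suc n)
    then show ?case
      using fixpoint_kpow_recursion[OF v p continue, of n] by (simp add: V_def algebra_simps)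
  qed
  have "(\<lambda>n. \<beta> ^ n * V n) \<longlonglongrightarrow> 0"
  proof (rule Lim_null_comparison)
    have "\<beta> ^ n * \<bar>V n\<bar> \<le> \<beta> ^ n * (C * \<kappa> 0 p / \<delta> ^ n)" for n
      unfolding V_def
      by (intro mult_left_mono integral_kpow_weighted_bound[OF vm vb z p]
          zero_le_power[OF less_imp_le[OF beta_pos]])
    then show "\<forall>\<^sub>F n in sequentially. norm (\<beta> ^ n * V n) \<le> C * \<kappa> 0 p * (\<beta> / \<delta>) ^ n"
      using beta_pos by (simp add: abs_mult power_divide mult_ac)
    show "(\<lambda>n. C * \<kappa> 0 p * (\<beta> / \<delta>) ^ n) \<longlonglongrightarrow> 0"
      using tendsto_mult_left[OF LIMSEQ_power_zero[of "\<beta> / \<delta>"], of "C * \<kappa> 0 p"]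
        beta_pos beta_lt_delta delta_pos by simp
  qed
  then have "(\<lambda>n. v 0 p - \<beta> ^ n * V n) \<longlonglongrightarrow> v 0 p - 0"
    by (intro tendsto_diff tendsto_const)
  then show ?thesis
    unfolding sums_def partial by simp
qed

lemma fixpoint_neg_state_0:
  assumes v: "v \<in> CC \<kappa>" "T v = v" and p: "0 \<le> p"
    and never_exit: "\<And>p. 0 \<le> p \<Longrightarrow> (\<Sum>t. \<beta> ^ t * (\<integral>y. prof y p \<partial>kpow G t 0)) \<le> 0"
  shows "v 0 p < 0"
proof (cases "(\<integral>y. v y p \<partial>G 0) \<le> 0")
  case True
  then show ?thesis using fixpoint_eq[OF v(2) order_refl p] prof_neg[OF order_refl p] by simp
next
  case False
  have p1: "0 \<le> p + 1" using p by simp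
  have "(\<integral>y. v y p \<partial>G 0) \<le> (\<integral>y. v y (p + 1) \<partial>G 0)"
    using p by (intro integral_kernel_CC_mono[OF v(1)]) simp_all
  with False have "0 < (\<integral>y. v y (p + 1) \<partial>G 0)" by simp
  from fixpoint_sums_discounted_profits[OF v p1 this]
  have "v 0 (p + 1) \<le> 0" using never_exit[OF p1] by (simp add: sums_iff)
  moreover have "v 0 p < v 0 (p + 1)"
    using fixpoint_strict_incr[OF v] p unfolding strict_incr2_def by simp
  ultimately show ?thesis by simp
qed

end

theorem lemma1:
  fixes D :: "real \<Rightarrow> real"
    and prof q :: "real \<Rightarrow> real \<Rightarrow> real"
    and G :: "real \<Rightarrow> real measure"
    and \<gamma> :: "real measure"
    and r \<beta> \<delta> ce b :: real
  assumes
    \<comment> \<open>(A1)\<close>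
    A1_cont: "continuous_on {0<..} D"
    and A1_dec: "strict_antimono_on {0<..} D"
    and A1_zero: "filterlim D at_top (at_right 0)"
    and A1_inf: "(D \<longlongrightarrow> 0) at_top"
    \<comment> \<open>(A2)\<close>
    and A2_cont: "cont2 prof" "cont2 q"
    and A2_incr: "strict_incr2 prof" "strict_incr2 q"
    and A2_qnn: "\<And>x p. 0 \<le> x \<Longrightarrow> 0 \<le> p \<Longrightarrow> 0 \<le> q x p"
    and A2_neg: "\<And>x p. 0 \<le> x \<Longrightarrow> 0 \<le> p \<Longrightarrow> x = 0 \<or> p = 0 \<Longrightarrow> prof x p < 0"
    \<comment> \<open>(A3)\<close>
    and A3_kernel: "G \<in> Rp \<rightarrow>\<^sub>M prob_algebra Rp"
    and A3_mono: "\<And>a x x'. 0 \<le> a \<Longrightarrow> 0 \<le> x \<Longrightarrow> x \<le> x' \<Longrightarrow>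
                   measure (G x') {0..a} \<le> measure (G x) {0..a}"
    and A3a: "\<And>a x. 0 < a \<Longrightarrow> 0 \<le> x \<Longrightarrow> \<exists>n\<ge>1. measure (kpow G n x) {0..<a} > 0"
    and A3b: "\<And>p. 0 < p \<Longrightarrow> \<exists>x\<ge>0. (\<integral>y. prof y p \<partial>G x) \<ge> 0"
    and r_pos: "0 < r"
    and \<beta>_def: "\<beta> = 1 / (1 + r)"
    \<comment> \<open>(A4)\<close>
    and A4_prob: "\<gamma> \<in> space (prob_algebra Rp)"
    and A4_int: "\<And>p. 0 \<le> p \<Longrightarrow> integrable \<gamma> (\<lambda>x. q x p)"
    and A4_pos: "\<And>a. 0 < a \<Longrightarrow> measure \<gamma> {0..a} > 0"
    and ce_pos: "0 < ce"
    \<comment> \<open>(A5)\<close>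
    and A5: "\<exists>p>0. (\<integral>x. prof x p \<partial>\<gamma>) \<ge> ce"
    \<comment> \<open>(A6)\<close>
    and A6: "\<And>p. 0 \<le> p \<Longrightarrow> (\<Sum>t. \<beta> ^ t * (\<integral>y. prof y p \<partial>kpow G t 0)) \<le> 0"
    \<comment> \<open>(A7)\<close>
    and A7_\<delta>: "\<beta> < \<delta>" "\<delta> < 1"
    and A7_int: "\<And>p t. 0 \<le> p \<Longrightarrow> integrable (\<gamma> \<bind> kpow G t) (\<lambda>y. prof y p)"
    and A7_sum: "\<And>p. 0 \<le> p \<Longrightarrow> summable (\<lambda>t. \<delta> ^ t * (\<integral>y. prof y p \<partial>(\<gamma> \<bind> kpow G t)))"
    \<comment> \<open>the constant b and finiteness of kappa\<close>
    and b_bound: "\<And>x p. 0 \<le> x \<Longrightarrow> 0 \<le> p \<Longrightarrow> prof x p + b \<ge> 1"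
    and kappa_int: "\<And>x p t. 0 \<le> x \<Longrightarrow> 0 \<le> p \<Longrightarrow> integrable (kpow G t x) (\<lambda>y. prof y p)"
    and kappa_fin: "\<And>x p. 0 \<le> x \<Longrightarrow> 0 \<le> p \<Longrightarrow>
                      summable (\<lambda>t. \<delta> ^ t * (\<integral>y. prof y p + b \<partial>kpow G t x))"
    \<comment> \<open>(A8)\<close>
    and A8: "\<And>u. u \<in> CC (kappa G prof b \<delta>) \<Longrightarrow> continuous_on Q (\<lambda>(x, p). \<integral>y. u y p \<partial>G x)"
  shows "(\<forall>v\<in>CC (kappa G prof b \<delta>). bellman G prof \<beta> v \<in> CC (kappa G prof b \<delta>))
       \<and> (\<exists>c. 0 \<le> c \<and> c < 1 \<and> (\<forall>v\<in>CC (kappa G prof b \<delta>). \<forall>w\<in>CC (kappa G prof b \<delta>).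
            dk (kappa G prof b \<delta>) (bellman G prof \<beta> v) (bellman G prof \<beta> w)
              \<le> c * dk (kappa G prof b \<delta>) v w))
       \<and> (\<exists>!v. v \<in> CC (kappa G prof b \<delta>) \<and> bellman G prof \<beta> v = v)
       \<and> (\<forall>v. v \<in> CC (kappa G prof b \<delta>) \<and> bellman G prof \<beta> v = v \<longrightarrow>
            strict_incr2 v \<and> (\<forall>x p. 0 \<le> x \<and> 0 \<le> p \<and> (x = 0 \<or> p = 0) \<longrightarrow> v x p < 0))"
proof -
  have beta_pos: "0 < \<beta>" using r_pos \<beta>_def by simp
  interpret bellman_model G prof b \<delta> \<beta>
    by unfold_locales
      (fact A3_kernel A3_mono A2_cont(1) strict_incr2_imp_incr2[OF A2_incr(1)] A2_incr(1) A2_neg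
        b_bound kappa_int kappa_fin beta_pos A7_\<delta>(1) A8 less_trans[OF beta_pos A7_\<delta>(1)])+
  have contraction: "\<exists>c. 0 \<le> c \<and> c < 1 \<and> (\<forall>v\<in>CC \<kappa>. \<forall>w\<in>CC \<kappa>. dk \<kappa> (T v) (T w) \<le> c * dk \<kappa> v w)"
    using bellman_contraction beta_pos beta_lt_delta delta_pos by (intro exI[of _ "\<beta> / \<delta>"]) auto
  have negative: "v x p < 0" if "v \<in> CC \<kappa>" "T v = v" "0 \<le> x" "0 \<le> p" "x = 0 \<or> p = 0" for v x p
    using fixpoint_neg_state_0[OF that(1,2,4) A6] fixpoint_neg_price_0[OF that(1-3)] that(5) by auto
  show ?thesis
    using bellman_CC contraction bellman_unique_fixpoint fixpoint_strict_incr negative by blast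
qed

end
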